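(* Let $\Sigma$ be a signature on standard form over a variable system with the de Bruijn property, $F:\mathcal F_\Sigma\to\mathcal C$ a cwf morphism, $\Pi$ a predicate signature on standard form over $\Sigma$, and $\mathcal D$ a first-order hyperdoctrine over $\mathcal C$. Let $G:\mathcal H_{\Sigma,\Pi,\emptyset}\to\mathcal D$ be an $F$-based hyperdoctrine morphism, and $T$ a theory over $(\Sigma,\Pi)$ such that $G_\Gamma(\Gamma,\phi)\le G_\Gamma(\Gamma,\psi)$ for every sequent $(\phi\Rightarrow_\Gamma\psi)\in T$. Then $G_\Gamma(\Gamma,\phi)\le G_\Gamma(\Gamma,\psi)$ for every $(\phi\Rightarrow_\Gamma\psi)\in\mathrm{Thm}(\Sigma,\Pi,T)$; consequently $G$ (with the same components) is an $F$-based hyperdoctrine morphism $\mathcal H_{\Sigma,\Pi,T}\to\mathcal D$, i.e. a model of $T$.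
   Context: Type system: fix an infinite set $V$ of variables with decidable equality and a fresh variable provider: functions $\varphi,\mathsf{fr}$ assigning to each finite $X\subseteq V$ an inhabited $\varphi(X)\subseteq V\setminus X$ and $\mathsf{fr}(X)\in\varphi(X)$; de Bruijn property: $\varphi(X)=\{\mathsf{fr}(X)\}$. Disjoint sets $F$ (function symbols), $T$ (type symbols). Preelements: terms from variables and $F$; pretypes $S(t_1,\ldots,t_n)$, $S\in T$. $\mathrm V(E)$: variables of $E$; $E[\bar a/\bar x]$: simultaneous substitution. Precontext $\Gamma=x_1:A_1,\ldots,x_n:A_n$ with $x_k\in\varphi(\{x_1,\ldots,x_{k-1}\})$, $\mathrm V(A_k)\subseteq\{x_1,\ldots,x_{k-1}\}$; $\mathrm{OV}(\Gamma)=x_1,\ldots,x_n$; $\mathrm{Fresh}(\Gamma)=\varphi(\mathrm V(\Gamma))$, $\mathrm{fresh}(\Gamma)=\mathsf{fr}(\mathrm V(\Gamma))$; $E[\bar a/\Gamma]=E[\bar a/x_1,\ldots,x_n]$. Top variables $\mathrm{TV}(\langle\rangle)=\emptyset$, $\mathrm{TV}(\Gamma,x:A)=(\mathrm{TV}(\Gamma)\setminus\mathrm V(A))\cup\{x\}$; a determining sequence is a strictly increasing $\bar i=i_1,\ldots,i_k$ with $\mathrm{TV}(\Gamma)\subseteq\{x_{i_1},\ldots,x_{i_k}\}$, $\bar a_{\bar i}=a_{i_1},\ldots,a_{i_k}$; a declaration is on standard form if $\bar i=1,\ldots,n$ (then $\bar i$ is omitted). Declarations $(\Gamma,S,\bar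 i)$ and $(\Gamma,f,\bar i,U)$ ($\mathrm V(U)\subseteq\mathrm V(\Gamma)$), each symbol at most once. $\mathcal J(\Sigma)$: smallest set of judgements closed under (R1) $\langle\rangle$ context; (R2) $\Gamma$ context, $A$ type $(\Gamma)$ $\Rightarrow$ $\Gamma,x:A$ context ($x\in\mathrm{Fresh}(\Gamma)$); (R3) $x_1:A_1,\ldots,x_n:A_n$ context $\Rightarrow$ $x_i:A_i\ (x_1:A_1,\ldots,x_n:A_n)$; (R4) $(\Gamma,S,\bar i)\in\Sigma$, $\bar a:\Delta\to\Gamma$ $\Rightarrow$ $S(\bar a_{\bar i})$ type $(\Delta)$; (R5) $(\Gamma,f,\bar i,U)\in\Sigma$, $\bar a:\Delta\to\Gamma$, $U[\bar a/\Gamma]$ type $(\Delta)$ $\Rightarrow$ $f(\bar a_{\bar i}):U[\bar a/\Gamma]\ (\Delta)$; where "$\bar a:\Delta\to\Gamma$" abbreviates $\Delta$ context, $\Gamma$ context, $a_k:A_k[a_1,\ldots,a_{k-1}/x_1,\ldots,x_{k-1}]\ (\Delta)$. $\Sigma$ is a signature if declared contexts are contexts and declared $U$ are types in $\mathcal J(\Sigma)$. Cwf: a category $\mathcal C$ with terminal object; classes $\mathrm{Ty}(\Gamma)$ with functorial substitution $A\{f\}$; context extension $\Gamma.A$ with $\mathrm p(A):\Gamma.A\to\Gamma$; classes $\mathrm{Tm}(\Gamma,A)$ with functorial $a\{f\}\in\mathrm{Tm}(\Delta,A\{f\})$; $\mathrm v_A\in\mathrm{Tm}(\Gamma.A,A\{\mathrm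 p(A)\})$; $\langle f,a\rangle_A:\Delta\to\Gamma.A$ for $a\in\mathrm{Tm}(\Delta,A\{f\})$ with $\mathrm p(A)\langle f,a\rangle_A=f$, $\mathrm v_A\{\langle f,a\rangle_A\}=a$, $\langle\mathrm p(A)h,\mathrm v_A\{h\}\rangle_A=h$, $\langle f,a\rangle_A g=\langle fg,a\{g\}\rangle_A$; $f.A=\langle f\circ\mathrm p(A\{f\}),\mathrm v_{A\{f\}}\rangle_A:\Delta.A\{f\}\to\Gamma.A$. A cwf morphism $(F,\sigma,\theta):\mathcal C\to\mathcal C'$: a functor $F$ preserving the terminal object, $\sigma_\Gamma:\mathrm{Ty}(\Gamma)\to\mathrm{Ty}'(F\Gamma)$ with $\sigma_\Delta(A\{f\})=\sigma_\Gamma(A)\{Ff\}$, $F(\Gamma.A)=F\Gamma.\sigma_\Gamma(A)$, $F(\mathrm p(A))=\mathrm p(\sigma_\Gamma(A))$, and $\theta_{\Gamma,A}:\mathrm{Tm}(\Gamma,A)\to\mathrm{Tm}'(F\Gamma,\sigma_\Gamma(A))$ commuting with substitution, with $\theta(\mathrm v_A)=\mathrm v_{\sigma_\Gamma(A)}$ and $F\langle f,a\rangle_A=\langle Ff,\theta(a)\rangle_{\sigma_\Gamma(A)}$. The cwf $\mathcal F_\Sigma$: objects are contexts $\Gamma$ (i.e. ($\Gamma$ context)$\in\mathcal J(\Sigma)$); morphisms $(\Delta,\Gamma,\bar a)$ with $\bar a:\Delta\to\Gamma$ in $\mathcal J(\Sigma)$, composed by substitution, identity $(\Gamma,\Gamma,\mathrm{OV}(\Gamma))$;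 $\mathrm{Ty}(\Gamma)=\{(\Gamma,A):(A\text{ type }(\Gamma))\in\mathcal J(\Sigma)\}$, $(\Gamma,A)\{(\Delta,\Gamma,\bar a)\}=(\Delta,A[\bar a/\Gamma])$; $\mathrm{Tm}(\Gamma,(\Gamma,A))=\{((\Gamma,A),a):(a:A\ (\Gamma))\in\mathcal J(\Sigma)\}$; $\Gamma.(\Gamma,S)=\langle\Gamma,\mathrm{fresh}(\Gamma):S\rangle$, $\mathrm p=(\Gamma.(\Gamma,S),\Gamma,\mathrm{OV}(\Gamma))$, $\mathrm v=((\Gamma.(\Gamma,S),S),\mathrm{fresh}(\Gamma))$, $\langle(\Delta,\Gamma,\bar s),((\Delta,S[\bar s/\Gamma]),b)\rangle=(\Delta,\Gamma.(\Gamma,S),(\bar s,b))$. Heyting (pre)algebra: a preorder $\le$ (not necessarily antisymmetric) with $\top,\bot,\wedge,\vee,\to$ satisfying $\bot\le x\le\top$, $z\le x\wedge y$ iff $z\le x$ and $z\le y$, $x\vee y\le z$ iff $x\le z$ and $y\le z$, $z\le(x\to y)$ iff $z\wedge x\le y$; morphisms are monotone maps preserving the operations and constants. A first-order hyperdoctrine over a cwf $\mathcal C$ is $(\mathcal C,\mathrm{Pr},\forall,\exists)$ with $\mathrm{Pr}:\mathcal C^{\mathrm{op}}\to\mathrm{Heyting}$ a functor ($R\{f\}=\mathrm{Pr}(f)(R)$) and, for $S\in\mathrm{Ty}(\Gamma)$, monotone $\forall_S,\exists_S:\mathrm{Pr}(\Gamma.S)\to\mathrm{Pr}(\Gamma)$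 with $Q\le\forall_S(R)$ iff $Q\{\mathrm p(S)\}\le R$, and $\exists_S(R)\le Q$ iff $R\le Q\{\mathrm p(S)\}$ ($Q\in\mathrm{Pr}(\Gamma)$, $R\in\mathrm{Pr}(\Gamma.S)$), and for $f:\Delta\to\Gamma$: $\forall_S(R)\{f\}=\forall_{S\{f\}}(R\{f.S\})$, $\exists_S(R)\{f\}=\exists_{S\{f\}}(R\{f.S\})$. Given a cwf morphism $F=(F,\sigma,\theta):\mathcal C\to\mathcal C'$ and hyperdoctrines $\mathcal H=(\mathcal C,\mathrm{Pr},\forall,\exists)$, $\mathcal H'=(\mathcal C',\mathrm{Pr}',\forall',\exists')$, an $F$-based morphism $G:\mathcal H\to\mathcal H'$ is a family of Heyting morphisms $G_\Gamma:\mathrm{Pr}(\Gamma)\to\mathrm{Pr}'(F\Gamma)$ with $G_\Delta(R\{f\})=G_\Gamma(R)\{Ff\}$ for $f:\Delta\to\Gamma$, $G_\Gamma(\forall_S R)=\forall'_{\sigma_\Gamma(S)}(G_{\Gamma.S}R)$ and $G_\Gamma(\exists_S R)=\exists'_{\sigma_\Gamma(S)}(G_{\Gamma.S}R)$. Logic: predicate symbols from a set $P$ disjoint from $F\cup T$; a predicate declaration is $(\Gamma,\bar i,R)$ with ($\Gamma$ context)$\in\mathcal J(\Sigma)$, $\bar i$ determining, $R\in P$ (written $(\Gamma,R)$ on standard form); a predicate signature $\Pi$ declares each symbol at most once. $\mathrm{Form}(\Sigma,\Pi)$ is the smallest set of judgements "$\phi$ form $(\Gamma)$" with: $R(\bar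 a_{\bar i})$ form $(\Delta)$ for $(\Gamma,\bar i,R)\in\Pi$ and $\bar a:\Delta\to\Gamma$ in $\mathcal J(\Sigma)$; $\bot,\top$ form $(\Gamma)$ for contexts $\Gamma$; $(\phi\circ\psi)$ form $(\Gamma)$ for $\circ\in\{\wedge,\vee,\to\}$ from $\phi,\psi$ form $(\Gamma)$; $(Qx:A)\phi$ form $(\Gamma)$ for $Q\in\{\forall,\exists\}$ from $\phi$ form $(\Gamma,x:A)$ (with $(A\text{ type }(\Gamma))\in\mathcal J(\Sigma)$). Capture-avoiding substitution for $\bar a:\Delta\to\Gamma$: $\phi\{(\Delta,\Gamma,\bar a)\}=\phi[\bar a/\Gamma]$ for atomic $\phi$; it commutes with $\top,\bot,\wedge,\vee,\to$; and $((Qx:A)\theta)\{(\Delta,\Gamma,\bar a)\}=(Qy:A[\bar a/\Gamma])\,\theta\{(\langle\Delta,y:A[\bar a/\Gamma]\rangle,\langle\Gamma,x:A\rangle,(\bar a,y))\}$ with $y=\mathrm{fresh}(\Delta)$. A sequent is $\phi\Rightarrow_\Gamma\psi$ with $\phi,\psi$ form $(\Gamma)$; a theory is a set of sequents. Write $\mathbf p_\Gamma(x:A)=(\langle\Gamma,x:A\rangle,\Gamma,\mathrm{OV}(\Gamma))$. $\mathrm{Thm}(\Sigma,\Pi,T)$ is the smallest set of sequents containing $T$ and closed under: $\phi\Rightarrow_\Gamma\phi$; cut; $\theta\wedge\psi\Rightarrow_\Gamma\theta$, $\theta\wedge\psi\Rightarrow_\Gamma\psi$, from $\phi\Rightarrow_\Gamma\theta$,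 $\phi\Rightarrow_\Gamma\psi$ infer $\phi\Rightarrow_\Gamma\theta\wedge\psi$, $\phi\Rightarrow_\Gamma\top$; $\theta\Rightarrow_\Gamma\theta\vee\psi$, $\psi\Rightarrow_\Gamma\theta\vee\psi$, from $\theta\Rightarrow_\Gamma\phi$, $\psi\Rightarrow_\Gamma\phi$ infer $\theta\vee\psi\Rightarrow_\Gamma\phi$, $\bot\Rightarrow_\Gamma\phi$; $\theta\wedge\psi\Rightarrow_\Gamma\phi$ iff $\theta\Rightarrow_\Gamma\psi\to\phi$; $\phi\{\mathbf p_\Gamma(x:A)\}\Rightarrow_{\Gamma,x:A}\psi$ iff $\phi\Rightarrow_\Gamma(\forall x:A)\psi$; $\psi\Rightarrow_{\Gamma,x:A}\phi\{\mathbf p_\Gamma(x:A)\}$ iff $(\exists x:A)\psi\Rightarrow_\Gamma\phi$ (each "iff" read as two rules); and substitution: from $\phi\Rightarrow_\Gamma\psi$ and $\bar a:\Delta\to\Gamma$ infer $\phi\{(\Delta,\Gamma,\bar a)\}\Rightarrow_\Delta\psi\{(\Delta,\Gamma,\bar a)\}$. Lindenbaum–Tarski hyperdoctrine $\mathcal H_{\Sigma,\Pi,T}=(\mathcal F_\Sigma,\mathrm{Pr}_{\Sigma,\Pi,T},\forall,\exists)$: $\mathrm{Pr}_{\Sigma,\Pi,T}(\Gamma)=\{(\Gamma,\phi):(\phi\text{ form }(\Gamma))\in\mathrm{Form}(\Sigma,\Pi)\}$ ordered by $(\Gamma,\phi)\le(\Gamma,\psi)$ iff $(\phi\Rightarrow_\Gamma\psi)\in\mathrm{Thm}(\Sigma,\Pi,T)$,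 Heyting operations given by the connectives; $\mathrm{Pr}((\Delta,\Gamma,\bar a))(\Gamma,\phi)=(\Delta,\phi\{(\Delta,\Gamma,\bar a)\})$; $\forall_{(\Gamma,A)}(\langle\Gamma,x:A\rangle,\psi)=(\Gamma,(\forall x:A)\psi)$, $\exists_{(\Gamma,A)}(\langle\Gamma,x:A\rangle,\psi)=(\Gamma,(\exists x:A)\psi)$. $\mathcal H_{\Sigma,\Pi,\emptyset}$ is the case $T=\emptyset$; its underlying sets $\mathrm{Pr}(\Gamma)$ coincide with those of $\mathcal H_{\Sigma,\Pi,T}$. *)

theory Defs
  imports Main
begin

section \<open>Syntax: preelements, pretypes, precontexts\<close>

datatype ('v,'f) ptm = Var 'v | App 'f "('v,'f) ptm list"

datatype ('v,'f,'s) pty = TyApp 's "('v,'f) ptm list"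

type_synonym ('v,'f,'s) ctx = "('v \<times> ('v,'f,'s) pty) list"

primrec vars_tm :: "('v,'f) ptm \<Rightarrow> 'v set" where
  "vars_tm (Var v) = {v}"
| "vars_tm (App f ts) = \<Union> (set (map vars_tm ts))"

primrec vars_ty :: "('v,'f,'s) pty \<Rightarrow> 'v set" where
  "vars_ty (TyApp S ts) = \<Union> (set (map vars_tm ts))"

definition vars_ctx :: "('v,'f,'s) ctx \<Rightarrow> 'v set" where
  "vars_ctx G = set (map fst G) \<union> \<Union> (vars_ty ` snd ` set G)"

definition ovars :: "('v,'f,'s) ctx \<Rightarrow> 'v list" where
  "ovars G = map fst G"

definition sub_of :: "'v list \<Rightarrow> ('v,'f) ptm list \<Rightarrow> 'v \<Rightarrow> ('v,'f) ptm" where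
  "sub_of xs as = (\<lambda>v. case map_of (zip xs as) v of None \<Rightarrow> Var v | Some t \<Rightarrow> t)"

primrec subst_tm :: "('v \<Rightarrow> ('v,'f) ptm) \<Rightarrow> ('v,'f) ptm \<Rightarrow> ('v,'f) ptm" where
  "subst_tm s (Var v) = s v"
| "subst_tm s (App f ts) = App f (map (subst_tm s) ts)"

primrec subst_ty :: "('v \<Rightarrow> ('v,'f) ptm) \<Rightarrow> ('v,'f,'s) pty \<Rightarrow> ('v,'f,'s) pty" where
  "subst_ty s (TyApp S ts) = TyApp S (map (subst_tm s) ts)"

text \<open>Top variables and determining sequences (indices are 0-based here).\<close>
definition TV :: "('v,'f,'s) ctx \<Rightarrow> 'v set" where
  "TV G = foldl (\<lambda>S (x,A). (S - vars_ty A) \<union> {x}) {} G"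

definition determining :: "('v,'f,'s) ctx \<Rightarrow> nat list \<Rightarrow> bool" where
  "determining G is \<longleftrightarrow> sorted_wrt (<) is \<and> (\<forall>i\<in>set is. i < length G)
     \<and> TV G \<subseteq> {fst (G ! i) |i. i \<in> set is}"

definition var_system :: "('v set \<Rightarrow> 'v set) \<Rightarrow> ('v set \<Rightarrow> 'v) \<Rightarrow> bool" where
  "var_system phi fr \<longleftrightarrow> infinite (UNIV :: 'v set) \<and>
     (\<forall>X. finite X \<longrightarrow> phi X \<noteq> {} \<and> phi X \<inter> X = {} \<and> fr X \<in> phi X)"

definition de_bruijn :: "('v set \<Rightarrow> 'v set) \<Rightarrow> ('v set \<Rightarrow> 'v) \<Rightarrow> bool" where
  "de_bruijn phi fr \<longleftrightarrow> (\<forall>X. finite X \<longrightarrow> phi X = {fr X})"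

definition fresh :: "('v set \<Rightarrow> 'v) \<Rightarrow> ('v,'f,'s) ctx \<Rightarrow> 'v" where
  "fresh fr G = fr (vars_ctx G)"

datatype ('v,'f,'s) decl =
    TyDecl "('v,'f,'s) ctx" 's "nat list"
  | FnDecl "('v,'f,'s) ctx" 'f "nat list" "('v,'f,'s) pty"

datatype ('v,'f,'s) jdg =
    CtxJ "('v,'f,'s) ctx"
  | TypeJ "('v,'f,'s) pty" "('v,'f,'s) ctx"
  | ElemJ "('v,'f) ptm" "('v,'f,'s) pty" "('v,'f,'s) ctx"

text \<open>\<open>a : Delta \<rightarrow> Gamma\<close> relative to a set of judgements.\<close>
definition mor_judg :: "('v,'f,'s) jdg set \<Rightarrow> ('v,'f,'s) ctx \<Rightarrow> ('v,'f,'s) ctx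
    \<Rightarrow> ('v,'f) ptm list \<Rightarrow> bool" where
  "mor_judg J D G as \<longleftrightarrow> CtxJ D \<in> J \<and> CtxJ G \<in> J \<and> length as = length G \<and>
     (\<forall>k<length G. ElemJ (as ! k)
        (subst_ty (sub_of (take k (ovars G)) (take k as)) (snd (G ! k))) D \<in> J)"

lemma mor_judg_mono: "A \<subseteq> B \<Longrightarrow> mor_judg A D G as \<longrightarrow> mor_judg B D G as"
  unfolding mor_judg_def by blast

inductive_set judg :: "('v set \<Rightarrow> 'v set) \<Rightarrow> ('v,'f,'s) decl set \<Rightarrow> ('v,'f,'s) jdg set"
  for phi :: "'v set \<Rightarrow> 'v set" and Sig :: "('v,'f,'s) decl set" where
  R1: "CtxJ [] \<in> judg phi Sig"
| R2: "\<lbrakk> CtxJ G \<in> judg phi Sig; TypeJ A G \<in> judg phi Sig; x \<in> phi (vars_ctx G) \<rbrakk>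
       \<Longrightarrow> CtxJ (G @ [(x,A)]) \<in> judg phi Sig"
| R3: "\<lbrakk> CtxJ G \<in> judg phi Sig; i < length G \<rbrakk>
       \<Longrightarrow> ElemJ (Var (fst (G ! i))) (snd (G ! i)) G \<in> judg phi Sig"
| R4: "\<lbrakk> TyDecl G S is \<in> Sig; mor_judg (judg phi Sig) D G as \<rbrakk>
       \<Longrightarrow> TypeJ (TyApp S (map ((!) as) is)) D \<in> judg phi Sig"
| R5: "\<lbrakk> FnDecl G f is U \<in> Sig; mor_judg (judg phi Sig) D G as;
         TypeJ (subst_ty (sub_of (ovars G) as) U) D \<in> judg phi Sig \<rbrakk>
       \<Longrightarrow> ElemJ (App f (map ((!) as) is)) (subst_ty (sub_of (ovars G) as) U) D \<in> judg phi Sig"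
monos mor_judg_mono

definition signature :: "('v set \<Rightarrow> 'v set) \<Rightarrow> ('v,'f,'s) decl set \<Rightarrow> bool" where
  "signature phi Sig \<longleftrightarrow>
     (\<forall>G S is. TyDecl G S is \<in> Sig \<longrightarrow> CtxJ G \<in> judg phi Sig \<and> determining G is) \<and>
     (\<forall>G f is U. FnDecl G f is U \<in> Sig \<longrightarrow> CtxJ G \<in> judg phi Sig \<and> determining G is
         \<and> vars_ty U \<subseteq> vars_ctx G \<and> TypeJ U G \<in> judg phi Sig) \<and>
     (\<forall>G1 is1 G2 is2 S. TyDecl G1 S is1 \<in> Sig \<longrightarrow> TyDecl G2 S is2 \<in> Sig \<longrightarrow> G1 = G2 \<and> is1 = is2) \<and>
     (\<forall>G1 is1 U1 G2 is2 U2 f. FnDecl G1 f is1 U1 \<in> Sig \<longrightarrow> FnDecl G2 f is2 U2 \<in> Sig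
         \<longrightarrow> G1 = G2 \<and> is1 = is2 \<and> U1 = U2)"

definition sig_standard :: "('v,'f,'s) decl set \<Rightarrow> bool" where
  "sig_standard Sig \<longleftrightarrow>
     (\<forall>G S is. TyDecl G S is \<in> Sig \<longrightarrow> is = [0..<length G]) \<and>
     (\<forall>G f is U. FnDecl G f is U \<in> Sig \<longrightarrow> is = [0..<length G])"

record ('o,'m,'ty,'tm) cwf =
  cw_obj :: "'o set"
  cw_hom :: "'o \<Rightarrow> 'o \<Rightarrow> 'm set"
  cw_comp :: "'m \<Rightarrow> 'm \<Rightarrow> 'm"   (* cw_comp g f = g o f *)
  cw_id :: "'o \<Rightarrow> 'm"
  cw_Ty :: "'o \<Rightarrow> 'ty set"
  cw_tysub :: "'ty \<Rightarrow> 'm \<Rightarrow> 'ty"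
  cw_Tm :: "'o \<Rightarrow> 'ty \<Rightarrow> 'tm set"
  cw_tmsub :: "'tm \<Rightarrow> 'm \<Rightarrow> 'tm"
  cw_ext :: "'o \<Rightarrow> 'ty \<Rightarrow> 'o"
  cw_p :: "'o \<Rightarrow> 'ty \<Rightarrow> 'm"
  cw_v :: "'o \<Rightarrow> 'ty \<Rightarrow> 'tm"
  cw_pair :: "'o \<Rightarrow> 'ty \<Rightarrow> 'm \<Rightarrow> 'tm \<Rightarrow> 'm"

definition is_terminal :: "('o,'m,'ty,'tm) cwf \<Rightarrow> 'o \<Rightarrow> bool" where
  "is_terminal C t \<longleftrightarrow> t \<in> cw_obj C \<and> (\<forall>G\<in>cw_obj C. \<exists>!f. f \<in> cw_hom C G t)"

definition cwf :: "('o,'m,'ty,'tm) cwf \<Rightarrow> bool" where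
  "cwf C \<longleftrightarrow>
    \<comment> \<open>category\<close>
    (\<forall>G\<in>cw_obj C. cw_id C G \<in> cw_hom C G G) \<and>
    (\<forall>A\<in>cw_obj C. \<forall>B\<in>cw_obj C. \<forall>E\<in>cw_obj C. \<forall>f\<in>cw_hom C A B. \<forall>g\<in>cw_hom C B E.
        cw_comp C g f \<in> cw_hom C A E) \<and>
    (\<forall>A\<in>cw_obj C. \<forall>B\<in>cw_obj C. \<forall>f\<in>cw_hom C A B.
        cw_comp C (cw_id C B) f = f \<and> cw_comp C f (cw_id C A) = f) \<and>
    (\<forall>A\<in>cw_obj C. \<forall>B\<in>cw_obj C. \<forall>E\<in>cw_obj C. \<forall>H\<in>cw_obj C.
       \<forall>f\<in>cw_hom C A B. \<forall>g\<in>cw_hom C B E. \<forall>h\<in>cw_hom C E H.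
        cw_comp C h (cw_comp C g f) = cw_comp C (cw_comp C h g) f) \<and>
    (\<exists>t. is_terminal C t) \<and>
    \<comment> \<open>types\<close>
    (\<forall>G\<in>cw_obj C. \<forall>D\<in>cw_obj C. \<forall>A\<in>cw_Ty C G. \<forall>f\<in>cw_hom C D G.
        cw_tysub C A f \<in> cw_Ty C D) \<and>
    (\<forall>G\<in>cw_obj C. \<forall>A\<in>cw_Ty C G. cw_tysub C A (cw_id C G) = A) \<and>
    (\<forall>G\<in>cw_obj C. \<forall>D\<in>cw_obj C. \<forall>E\<in>cw_obj C. \<forall>A\<in>cw_Ty C G.
       \<forall>f\<in>cw_hom C D G. \<forall>g\<in>cw_hom C E D.
        cw_tysub C A (cw_comp C f g) = cw_tysub C (cw_tysub C A f) g) \<and>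
    \<comment> \<open>terms\<close>
    (\<forall>G\<in>cw_obj C. \<forall>D\<in>cw_obj C. \<forall>A\<in>cw_Ty C G. \<forall>a\<in>cw_Tm C G A. \<forall>f\<in>cw_hom C D G.
        cw_tmsub C a f \<in> cw_Tm C D (cw_tysub C A f)) \<and>
    (\<forall>G\<in>cw_obj C. \<forall>A\<in>cw_Ty C G. \<forall>a\<in>cw_Tm C G A. cw_tmsub C a (cw_id C G) = a) \<and>
    (\<forall>G\<in>cw_obj C. \<forall>D\<in>cw_obj C. \<forall>E\<in>cw_obj C. \<forall>A\<in>cw_Ty C G. \<forall>a\<in>cw_Tm C G A.
       \<forall>f\<in>cw_hom C D G. \<forall>g\<in>cw_hom C E D.
        cw_tmsub C a (cw_comp C f g) = cw_tmsub C (cw_tmsub C a f) g) \<and>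
    \<comment> \<open>context comprehension\<close>
    (\<forall>G\<in>cw_obj C. \<forall>A\<in>cw_Ty C G.
        cw_ext C G A \<in> cw_obj C \<and> cw_p C G A \<in> cw_hom C (cw_ext C G A) G \<and>
        cw_v C G A \<in> cw_Tm C (cw_ext C G A) (cw_tysub C A (cw_p C G A))) \<and>
    (\<forall>G\<in>cw_obj C. \<forall>D\<in>cw_obj C. \<forall>A\<in>cw_Ty C G. \<forall>f\<in>cw_hom C D G.
       \<forall>a\<in>cw_Tm C D (cw_tysub C A f).
        cw_pair C G A f a \<in> cw_hom C D (cw_ext C G A) \<and>
        cw_comp C (cw_p C G A) (cw_pair C G A f a) = f \<and>
        cw_tmsub C (cw_v C G A) (cw_pair C G A f a) = a \<and>
        (\<forall>E\<in>cw_obj C. \<forall>g\<in>cw_hom C E D.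
           cw_comp C (cw_pair C G A f a) g
             = cw_pair C G A (cw_comp C f g) (cw_tmsub C a g))) \<and>
    (\<forall>G\<in>cw_obj C. \<forall>D\<in>cw_obj C. \<forall>A\<in>cw_Ty C G. \<forall>h\<in>cw_hom C D (cw_ext C G A).
        cw_pair C G A (cw_comp C (cw_p C G A) h) (cw_tmsub C (cw_v C G A) h) = h)"

definition cw_dot :: "('o,'m,'ty,'tm) cwf \<Rightarrow> 'o \<Rightarrow> 'o \<Rightarrow> 'm \<Rightarrow> 'ty \<Rightarrow> 'm" where
  "cw_dot C D G f A = cw_pair C G A
      (cw_comp C f (cw_p C D (cw_tysub C A f))) (cw_v C D (cw_tysub C A f))"

definition cwf_morphism ::
  "('o,'m,'ty,'tm) cwf \<Rightarrow> ('o2,'m2,'ty2,'tm2) cwf \<Rightarrow> ('o \<Rightarrow> 'o2) \<Rightarrow> ('m \<Rightarrow> 'm2)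
   \<Rightarrow> ('o \<Rightarrow> 'ty \<Rightarrow> 'ty2) \<Rightarrow> ('o \<Rightarrow> 'ty \<Rightarrow> 'tm \<Rightarrow> 'tm2) \<Rightarrow> bool" where
  "cwf_morphism C C' Fo Fm sg th \<longleftrightarrow>
    \<comment> \<open>functor\<close>
    (\<forall>G\<in>cw_obj C. Fo G \<in> cw_obj C') \<and>
    (\<forall>G\<in>cw_obj C. \<forall>D\<in>cw_obj C. \<forall>f\<in>cw_hom C D G. Fm f \<in> cw_hom C' (Fo D) (Fo G)) \<and>
    (\<forall>G\<in>cw_obj C. Fm (cw_id C G) = cw_id C' (Fo G)) \<and>
    (\<forall>A\<in>cw_obj C. \<forall>B\<in>cw_obj C. \<forall>E\<in>cw_obj C. \<forall>f\<in>cw_hom C A B. \<forall>g\<in>cw_hom C B E.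
        Fm (cw_comp C g f) = cw_comp C' (Fm g) (Fm f)) \<and>
    \<comment> \<open>preserves the terminal object\<close>
    (\<forall>t. is_terminal C t \<longrightarrow> is_terminal C' (Fo t)) \<and>
    \<comment> \<open>types\<close>
    (\<forall>G\<in>cw_obj C. \<forall>A\<in>cw_Ty C G. sg G A \<in> cw_Ty C' (Fo G)) \<and>
    (\<forall>G\<in>cw_obj C. \<forall>D\<in>cw_obj C. \<forall>A\<in>cw_Ty C G. \<forall>f\<in>cw_hom C D G.
        sg D (cw_tysub C A f) = cw_tysub C' (sg G A) (Fm f)) \<and>
    (\<forall>G\<in>cw_obj C. \<forall>A\<in>cw_Ty C G.
        Fo (cw_ext C G A) = cw_ext C' (Fo G) (sg G A) \<and>
        Fm (cw_p C G A) = cw_p C' (Fo G) (sg G A)) \<and>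
    \<comment> \<open>terms\<close>
    (\<forall>G\<in>cw_obj C. \<forall>A\<in>cw_Ty C G. \<forall>a\<in>cw_Tm C G A. th G A a \<in> cw_Tm C' (Fo G) (sg G A)) \<and>
    (\<forall>G\<in>cw_obj C. \<forall>D\<in>cw_obj C. \<forall>A\<in>cw_Ty C G. \<forall>a\<in>cw_Tm C G A. \<forall>f\<in>cw_hom C D G.
        th D (cw_tysub C A f) (cw_tmsub C a f) = cw_tmsub C' (th G A a) (Fm f)) \<and>
    (\<forall>G\<in>cw_obj C. \<forall>A\<in>cw_Ty C G.
        th (cw_ext C G A) (cw_tysub C A (cw_p C G A)) (cw_v C G A) = cw_v C' (Fo G) (sg G A)) \<and>
    (\<forall>G\<in>cw_obj C. \<forall>D\<in>cw_obj C. \<forall>A\<in>cw_Ty C G. \<forall>f\<in>cw_hom C D G.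
       \<forall>a\<in>cw_Tm C D (cw_tysub C A f).
        Fm (cw_pair C G A f a)
          = cw_pair C' (Fo G) (sg G A) (Fm f) (th D (cw_tysub C A f) a))"

section \<open>The term model cwf \<open>F_Sigma\<close>\<close>

type_synonym ('v,'f,'s) smor = "('v,'f,'s) ctx \<times> ('v,'f,'s) ctx \<times> ('v,'f) ptm list"
type_synonym ('v,'f,'s) sty = "('v,'f,'s) ctx \<times> ('v,'f,'s) pty"
type_synonym ('v,'f,'s) stm = "('v,'f,'s) sty \<times> ('v,'f) ptm"

definition FSig :: "('v set \<Rightarrow> 'v set) \<Rightarrow> ('v set \<Rightarrow> 'v) \<Rightarrow> ('v,'f,'s) decl set \<Rightarrow>
   (('v,'f,'s) ctx, ('v,'f,'s) smor, ('v,'f,'s) sty, ('v,'f,'s) stm) cwf" where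
  "FSig phi fr Sig = \<lparr>
     cw_obj = {G. CtxJ G \<in> judg phi Sig},
     cw_hom = (\<lambda>D G. {(D, G, as) |as. mor_judg (judg phi Sig) D G as}),
     cw_comp = (\<lambda>(D', G, as) (E, D, bs). (E, G, map (subst_tm (sub_of (ovars D) bs)) as)),
     cw_id = (\<lambda>G. (G, G, map Var (ovars G))),
     cw_Ty = (\<lambda>G. {(G, A) |A. TypeJ A G \<in> judg phi Sig}),
     cw_tysub = (\<lambda>(G', A) (D, G, as). (D, subst_ty (sub_of (ovars G) as) A)),
     cw_Tm = (\<lambda>G X. {(X, a) |a. fst X = G \<and> ElemJ a (snd X) G \<in> judg phi Sig}),
     cw_tmsub = (\<lambda>((G', A), a) (D, G, as).
        ((D, subst_ty (sub_of (ovars G) as) A), subst_tm (sub_of (ovars G) as) a)),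
     cw_ext = (\<lambda>G X. G @ [(fresh fr G, snd X)]),
     cw_p = (\<lambda>G X. (G @ [(fresh fr G, snd X)], G, map Var (ovars G))),
     cw_v = (\<lambda>G X. ((G @ [(fresh fr G, snd X)], snd X), Var (fresh fr G))),
     cw_pair = (\<lambda>G X (D, G', ss) (Y, b). (D, G @ [(fresh fr G, snd X)], ss @ [b])) \<rparr>"

record 'a heyting =
  hcar :: "'a set"
  hle :: "'a \<Rightarrow> 'a \<Rightarrow> bool"
  htop :: 'a
  hbot :: 'a
  hmeet :: "'a \<Rightarrow> 'a \<Rightarrow> 'a"
  hjoin :: "'a \<Rightarrow> 'a \<Rightarrow> 'a"
  himp :: "'a \<Rightarrow> 'a \<Rightarrow> 'a"

definition heyting_prealg :: "'a heyting \<Rightarrow> bool" where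
  "heyting_prealg H \<longleftrightarrow>
    (\<forall>x\<in>hcar H. hle H x x) \<and>
    (\<forall>x\<in>hcar H. \<forall>y\<in>hcar H. \<forall>z\<in>hcar H. hle H x y \<longrightarrow> hle H y z \<longrightarrow> hle H x z) \<and>
    htop H \<in> hcar H \<and> hbot H \<in> hcar H \<and>
    (\<forall>x\<in>hcar H. \<forall>y\<in>hcar H. hmeet H x y \<in> hcar H \<and> hjoin H x y \<in> hcar H \<and> himp H x y \<in> hcar H) \<and>
    (\<forall>x\<in>hcar H. hle H (hbot H) x \<and> hle H x (htop H)) \<and>
    (\<forall>x\<in>hcar H. \<forall>y\<in>hcar H. \<forall>z\<in>hcar H.
        (hle H z (hmeet H x y) \<longleftrightarrow> hle H z x \<and> hle H z y) \<and>
        (hle H (hjoin H x y) z \<longleftrightarrow> hle H x z \<and> hle H y z) \<and>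
        (hle H z (himp H x y) \<longleftrightarrow> hle H (hmeet H z x) y))"

definition heyting_hom :: "'a heyting \<Rightarrow> 'b heyting \<Rightarrow> ('a \<Rightarrow> 'b) \<Rightarrow> bool" where
  "heyting_hom H H' h \<longleftrightarrow>
    (\<forall>x\<in>hcar H. h x \<in> hcar H') \<and>
    (\<forall>x\<in>hcar H. \<forall>y\<in>hcar H. hle H x y \<longrightarrow> hle H' (h x) (h y)) \<and>
    h (htop H) = htop H' \<and> h (hbot H) = hbot H' \<and>
    (\<forall>x\<in>hcar H. \<forall>y\<in>hcar H.
        h (hmeet H x y) = hmeet H' (h x) (h y) \<and>
        h (hjoin H x y) = hjoin H' (h x) (h y) \<and>
        h (himp H x y) = himp H' (h x) (h y))"

record ('o,'m,'ty,'a) hyperdoc =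
  hd_Pr :: "'o \<Rightarrow> 'a heyting"
  hd_sub :: "'a \<Rightarrow> 'm \<Rightarrow> 'a"
  hd_all :: "'o \<Rightarrow> 'ty \<Rightarrow> 'a \<Rightarrow> 'a"
  hd_ex :: "'o \<Rightarrow> 'ty \<Rightarrow> 'a \<Rightarrow> 'a"

definition hyperdoctrine :: "('o,'m,'ty,'tm) cwf \<Rightarrow> ('o,'m,'ty,'a) hyperdoc \<Rightarrow> bool" where
  "hyperdoctrine C H \<longleftrightarrow>
    (\<forall>G\<in>cw_obj C. heyting_prealg (hd_Pr H G)) \<and>
    (\<forall>G\<in>cw_obj C. \<forall>D\<in>cw_obj C. \<forall>f\<in>cw_hom C D G.
        heyting_hom (hd_Pr H G) (hd_Pr H D) (\<lambda>R. hd_sub H R f)) \<and>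
    (\<forall>G\<in>cw_obj C. \<forall>R\<in>hcar (hd_Pr H G). hd_sub H R (cw_id C G) = R) \<and>
    (\<forall>G\<in>cw_obj C. \<forall>D\<in>cw_obj C. \<forall>E\<in>cw_obj C. \<forall>f\<in>cw_hom C D G. \<forall>g\<in>cw_hom C E D.
       \<forall>R\<in>hcar (hd_Pr H G). hd_sub H R (cw_comp C f g) = hd_sub H (hd_sub H R f) g) \<and>
    (\<forall>G\<in>cw_obj C. \<forall>S\<in>cw_Ty C G.
       (\<forall>R\<in>hcar (hd_Pr H (cw_ext C G S)).
           hd_all H G S R \<in> hcar (hd_Pr H G) \<and> hd_ex H G S R \<in> hcar (hd_Pr H G)) \<and>
       (\<forall>R\<in>hcar (hd_Pr H (cw_ext C G S)). \<forall>R'\<in>hcar (hd_Pr H (cw_ext C G S)).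
           hle (hd_Pr H (cw_ext C G S)) R R' \<longrightarrow>
             hle (hd_Pr H G) (hd_all H G S R) (hd_all H G S R') \<and>
             hle (hd_Pr H G) (hd_ex H G S R) (hd_ex H G S R')) \<and>
       (\<forall>Q\<in>hcar (hd_Pr H G). \<forall>R\<in>hcar (hd_Pr H (cw_ext C G S)).
           (hle (hd_Pr H G) Q (hd_all H G S R) \<longleftrightarrow>
              hle (hd_Pr H (cw_ext C G S)) (hd_sub H Q (cw_p C G S)) R) \<and>
           (hle (hd_Pr H G) (hd_ex H G S R) Q \<longleftrightarrow>
              hle (hd_Pr H (cw_ext C G S)) R (hd_sub H Q (cw_p C G S)))) \<and>
       (\<forall>D\<in>cw_obj C. \<forall>f\<in>cw_hom C D G. \<forall>R\<in>hcar (hd_Pr H (cw_ext C G S)).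
           hd_sub H (hd_all H G S R) f
             = hd_all H D (cw_tysub C S f) (hd_sub H R (cw_dot C D G f S)) \<and>
           hd_sub H (hd_ex H G S R) f
             = hd_ex H D (cw_tysub C S f) (hd_sub H R (cw_dot C D G f S))))"

text \<open>\<open>F\<close>-based hyperdoctrine morphism (the source and target hyperdoctrines and the cwf
  morphism \<open>F = (Fo,Fm,sg,th)\<close> are given separately).\<close>
definition hd_morphism ::
  "('o,'m,'ty,'tm) cwf \<Rightarrow> ('o2,'m2,'ty2,'tm2) cwf \<Rightarrow> ('o \<Rightarrow> 'o2) \<Rightarrow> ('m \<Rightarrow> 'm2)
   \<Rightarrow> ('o \<Rightarrow> 'ty \<Rightarrow> 'ty2) \<Rightarrow> ('o,'m,'ty,'a) hyperdoc \<Rightarrow> ('o2,'m2,'ty2,'b) hyperdoc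
   \<Rightarrow> ('o \<Rightarrow> 'a \<Rightarrow> 'b) \<Rightarrow> bool" where
  "hd_morphism C C' Fo Fm sg H H' G \<longleftrightarrow>
    (\<forall>X\<in>cw_obj C. heyting_hom (hd_Pr H X) (hd_Pr H' (Fo X)) (G X)) \<and>
    (\<forall>X\<in>cw_obj C. \<forall>D\<in>cw_obj C. \<forall>f\<in>cw_hom C D X. \<forall>R\<in>hcar (hd_Pr H X).
        G D (hd_sub H R f) = hd_sub H' (G X R) (Fm f)) \<and>
    (\<forall>X\<in>cw_obj C. \<forall>S\<in>cw_Ty C X. \<forall>R\<in>hcar (hd_Pr H (cw_ext C X S)).
        G X (hd_all H X S R) = hd_all H' (Fo X) (sg X S) (G (cw_ext C X S) R) \<and>
        G X (hd_ex H X S R) = hd_ex H' (Fo X) (sg X S) (G (cw_ext C X S) R))"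

section \<open>Formulas, theories, and the Lindenbaum--Tarski hyperdoctrine\<close>

type_synonym ('v,'f,'s,'r) pdecl = "('v,'f,'s) ctx \<times> nat list \<times> 'r"

definition pred_signature :: "('v set \<Rightarrow> 'v set) \<Rightarrow> ('v,'f,'s) decl set
    \<Rightarrow> ('v,'f,'s,'r) pdecl set \<Rightarrow> bool" where
  "pred_signature phi Sig Pi \<longleftrightarrow>
     (\<forall>(G, is, R)\<in>Pi. CtxJ G \<in> judg phi Sig \<and> determining G is) \<and>
     (\<forall>G1 is1 G2 is2 R. (G1, is1, R) \<in> Pi \<longrightarrow> (G2, is2, R) \<in> Pi \<longrightarrow> G1 = G2 \<and> is1 = is2)"

definition pred_standard :: "('v,'f,'s,'r) pdecl set \<Rightarrow> bool" where
  "pred_standard Pi \<longleftrightarrow> (\<forall>(G, is, R)\<in>Pi. is = [0..<length G])"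

datatype ('v,'f,'s,'r) form =
    Atom 'r "('v,'f) ptm list"
  | FBot | FTop
  | FAnd "('v,'f,'s,'r) form" "('v,'f,'s,'r) form"
  | FOr "('v,'f,'s,'r) form" "('v,'f,'s,'r) form"
  | FImp "('v,'f,'s,'r) form" "('v,'f,'s,'r) form"
  | FAll 'v "('v,'f,'s) pty" "('v,'f,'s,'r) form"
  | FEx 'v "('v,'f,'s) pty" "('v,'f,'s,'r) form"

inductive_set forms :: "('v set \<Rightarrow> 'v set) \<Rightarrow> ('v,'f,'s) decl set \<Rightarrow> ('v,'f,'s,'r) pdecl set
    \<Rightarrow> (('v,'f,'s,'r) form \<times> ('v,'f,'s) ctx) set"
  for phi Sig Pi where
  atom: "\<lbrakk> (G, is, R) \<in> Pi; mor_judg (judg phi Sig) D G as \<rbrakk>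
         \<Longrightarrow> (Atom R (map ((!) as) is), D) \<in> forms phi Sig Pi"
| bot: "CtxJ G \<in> judg phi Sig \<Longrightarrow> (FBot, G) \<in> forms phi Sig Pi"
| top: "CtxJ G \<in> judg phi Sig \<Longrightarrow> (FTop, G) \<in> forms phi Sig Pi"
| conj: "\<lbrakk> (a, G) \<in> forms phi Sig Pi; (b, G) \<in> forms phi Sig Pi \<rbrakk> \<Longrightarrow> (FAnd a b, G) \<in> forms phi Sig Pi"
| disj: "\<lbrakk> (a, G) \<in> forms phi Sig Pi; (b, G) \<in> forms phi Sig Pi \<rbrakk> \<Longrightarrow> (FOr a b, G) \<in> forms phi Sig Pi"
| imp: "\<lbrakk> (a, G) \<in> forms phi Sig Pi; (b, G) \<in> forms phi Sig Pi \<rbrakk> \<Longrightarrow> (FImp a b, G) \<in> forms phi Sig Pi"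
| all: "\<lbrakk> (a, G @ [(x, A)]) \<in> forms phi Sig Pi; TypeJ A G \<in> judg phi Sig \<rbrakk>
        \<Longrightarrow> (FAll x A a, G) \<in> forms phi Sig Pi"
| ex: "\<lbrakk> (a, G @ [(x, A)]) \<in> forms phi Sig Pi; TypeJ A G \<in> judg phi Sig \<rbrakk>
        \<Longrightarrow> (FEx x A a, G) \<in> forms phi Sig Pi"

primrec fsub :: "('v set \<Rightarrow> 'v) \<Rightarrow> ('v,'f,'s,'r) form \<Rightarrow> ('v,'f,'s) ctx \<Rightarrow> ('v,'f,'s) ctx
    \<Rightarrow> ('v,'f) ptm list \<Rightarrow> ('v,'f,'s,'r) form" where
  "fsub fr (Atom R ts) D G as = Atom R (map (subst_tm (sub_of (ovars G) as)) ts)"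
| "fsub fr FBot D G as = FBot"
| "fsub fr FTop D G as = FTop"
| "fsub fr (FAnd a b) D G as = FAnd (fsub fr a D G as) (fsub fr b D G as)"
| "fsub fr (FOr a b) D G as = FOr (fsub fr a D G as) (fsub fr b D G as)"
| "fsub fr (FImp a b) D G as = FImp (fsub fr a D G as) (fsub fr b D G as)"
| "fsub fr (FAll x A a) D G as =
     (let A' = subst_ty (sub_of (ovars G) as) A; y = fresh fr D
      in FAll y A' (fsub fr a (D @ [(y, A')]) (G @ [(x, A)]) (as @ [Var y])))"
| "fsub fr (FEx x A a) D G as =
     (let A' = subst_ty (sub_of (ovars G) as) A; y = fresh fr D
      in FEx y A' (fsub fr a (D @ [(y, A')]) (G @ [(x, A)]) (as @ [Var y])))"

definition fweak :: "('v set \<Rightarrow> 'v) \<Rightarrow> ('v,'f,'s,'r) form \<Rightarrow> ('v,'f,'s) ctx \<Rightarrow> 'v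
    \<Rightarrow> ('v,'f,'s) pty \<Rightarrow> ('v,'f,'s,'r) form" where
  "fweak fr a G x A = fsub fr a (G @ [(x, A)]) G (map Var (ovars G))"

type_synonym ('v,'f,'s,'r) seq = "('v,'f,'s,'r) form \<times> ('v,'f,'s) ctx \<times> ('v,'f,'s,'r) form"

definition theory_over :: "('v set \<Rightarrow> 'v set) \<Rightarrow> ('v,'f,'s) decl set \<Rightarrow> ('v,'f,'s,'r) pdecl set
    \<Rightarrow> ('v,'f,'s,'r) seq set \<Rightarrow> bool" where
  "theory_over phi Sig Pi T \<longleftrightarrow>
     (\<forall>(a, G, b)\<in>T. (a, G) \<in> forms phi Sig Pi \<and> (b, G) \<in> forms phi Sig Pi)"

inductive_set thms :: "('v set \<Rightarrow> 'v set) \<Rightarrow> ('v set \<Rightarrow> 'v) \<Rightarrow> ('v,'f,'s) decl set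
    \<Rightarrow> ('v,'f,'s,'r) pdecl set \<Rightarrow> ('v,'f,'s,'r) seq set \<Rightarrow> ('v,'f,'s,'r) seq set"
  for phi fr Sig Pi T where
  ax: "s \<in> T \<Longrightarrow> s \<in> thms phi fr Sig Pi T"
| refl: "(a, G) \<in> forms phi Sig Pi \<Longrightarrow> (a, G, a) \<in> thms phi fr Sig Pi T"
| cut: "\<lbrakk> (a, G, c) \<in> thms phi fr Sig Pi T; (c, G, b) \<in> thms phi fr Sig Pi T \<rbrakk>
        \<Longrightarrow> (a, G, b) \<in> thms phi fr Sig Pi T"
| andE1: "(FAnd c b, G) \<in> forms phi Sig Pi \<Longrightarrow> (FAnd c b, G, c) \<in> thms phi fr Sig Pi T"
| andE2: "(FAnd c b, G) \<in> forms phi Sig Pi \<Longrightarrow> (FAnd c b, G, b) \<in> thms phi fr Sig Pi T"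
| andI: "\<lbrakk> (a, G, c) \<in> thms phi fr Sig Pi T; (a, G, b) \<in> thms phi fr Sig Pi T \<rbrakk>
        \<Longrightarrow> (a, G, FAnd c b) \<in> thms phi fr Sig Pi T"
| topI: "\<lbrakk> (a, G) \<in> forms phi Sig Pi; (FTop, G) \<in> forms phi Sig Pi \<rbrakk>
        \<Longrightarrow> (a, G, FTop) \<in> thms phi fr Sig Pi T"
| orI1: "(FOr c b, G) \<in> forms phi Sig Pi \<Longrightarrow> (c, G, FOr c b) \<in> thms phi fr Sig Pi T"
| orI2: "(FOr c b, G) \<in> forms phi Sig Pi \<Longrightarrow> (b, G, FOr c b) \<in> thms phi fr Sig Pi T"
| orE: "\<lbrakk> (c, G, a) \<in> thms phi fr Sig Pi T; (b, G, a) \<in> thms phi fr Sig Pi T \<rbrakk>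
        \<Longrightarrow> (FOr c b, G, a) \<in> thms phi fr Sig Pi T"
| botE: "\<lbrakk> (a, G) \<in> forms phi Sig Pi; (FBot, G) \<in> forms phi Sig Pi \<rbrakk>
        \<Longrightarrow> (FBot, G, a) \<in> thms phi fr Sig Pi T"
| impI: "(FAnd c b, G, a) \<in> thms phi fr Sig Pi T \<Longrightarrow> (c, G, FImp b a) \<in> thms phi fr Sig Pi T"
| impE: "(c, G, FImp b a) \<in> thms phi fr Sig Pi T \<Longrightarrow> (FAnd c b, G, a) \<in> thms phi fr Sig Pi T"
| allI: "\<lbrakk> (fweak fr a G x A, G @ [(x, A)], b) \<in> thms phi fr Sig Pi T;
           (a, G) \<in> forms phi Sig Pi; (FAll x A b, G) \<in> forms phi Sig Pi \<rbrakk>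
        \<Longrightarrow> (a, G, FAll x A b) \<in> thms phi fr Sig Pi T"
| allE: "(a, G, FAll x A b) \<in> thms phi fr Sig Pi T
        \<Longrightarrow> (fweak fr a G x A, G @ [(x, A)], b) \<in> thms phi fr Sig Pi T"
| exE: "\<lbrakk> (b, G @ [(x, A)], fweak fr a G x A) \<in> thms phi fr Sig Pi T;
           (a, G) \<in> forms phi Sig Pi; (FEx x A b, G) \<in> forms phi Sig Pi \<rbrakk>
        \<Longrightarrow> (FEx x A b, G, a) \<in> thms phi fr Sig Pi T"
| exI: "(FEx x A b, G, a) \<in> thms phi fr Sig Pi T
        \<Longrightarrow> (b, G @ [(x, A)], fweak fr a G x A) \<in> thms phi fr Sig Pi T"
| subst: "\<lbrakk> (a, G, b) \<in> thms phi fr Sig Pi T; mor_judg (judg phi Sig) D G as \<rbrakk>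
        \<Longrightarrow> (fsub fr a D G as, D, fsub fr b D G as) \<in> thms phi fr Sig Pi T"

definition LT :: "('v set \<Rightarrow> 'v set) \<Rightarrow> ('v set \<Rightarrow> 'v) \<Rightarrow> ('v,'f,'s) decl set
    \<Rightarrow> ('v,'f,'s,'r) pdecl set \<Rightarrow> ('v,'f,'s,'r) seq set
    \<Rightarrow> (('v,'f,'s) ctx, ('v,'f,'s) smor, ('v,'f,'s) sty, ('v,'f,'s) ctx \<times> ('v,'f,'s,'r) form) hyperdoc" where
  "LT phi fr Sig Pi T = \<lparr>
     hd_Pr = (\<lambda>G. \<lparr> hcar = {(G, a) |a. (a, G) \<in> forms phi Sig Pi},
                    hle = (\<lambda>(G1, a) (G2, b). (a, G1, b) \<in> thms phi fr Sig Pi T),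
                    htop = (G, FTop), hbot = (G, FBot),
                    hmeet = (\<lambda>(_, a) (_, b). (G, FAnd a b)),
                    hjoin = (\<lambda>(_, a) (_, b). (G, FOr a b)),
                    himp = (\<lambda>(_, a) (_, b). (G, FImp a b)) \<rparr>),
     hd_sub = (\<lambda>(G', a) (D, G, as). (D, fsub fr a D G as)),
     hd_all = (\<lambda>G X (_, b). (G, FAll (fresh fr G) (snd X) b)),
     hd_ex = (\<lambda>G X (_, b). (G, FEx (fresh fr G) (snd X) b)) \<rparr>"

end

theory Submission
  imports Defs
begin

text \<open>
  Axioms of \<open>T\<close> hold by hypothesis, and every
  propositional rule is the corresponding law of the Heyting prealgebra \<open>Pr(F\<Gamma>)\<close>, because \<open>G\<close>
  preserves the connectives. The quantifier rules are the adjunctions \<open>\<exists>\<^sub>S \<stileturn> p(S)\<^sup>* \<stileturn> \<forall>\<^sub>S\<close>: \<open>G\<close> commutes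
  with weakening and with the quantifiers, and by the de Bruijn property every extension \<open>\<Gamma>, x:A\<close>
  is literally the comprehension \<open>\<Gamma>.(\<Gamma>,A)\<close> of \<open>\<F>\<^sub>\<Sigma>\<close>. The substitution rule holds because
  \<open>G\<close> commutes with substitution, which is monotone in \<open>\<D>\<close>; on the syntactic side it needs
  that judgements, hence formulas, are stable under substitution along context morphisms.
  Finally, the Lindenbaum--Tarski hyperdoctrines of \<open>T\<close> and of \<open>\<emptyset>\<close> differ only in their order,
  so soundness says exactly that \<open>G\<close> is monotone, hence a morphism, for the former.
\<close>

lemma finite_vars_tm: "finite (vars_tm t)"
  by (induction t) auto

lemma finite_vars_ty: "finite (vars_ty A)"
  by (cases A) (auto simp: finite_vars_tm)

lemma finite_vars_ctx: "finite (vars_ctx G)"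
  by (auto simp: vars_ctx_def finite_vars_ty)

lemma set_ovars_subset_vars_ctx: "set (ovars G) \<subseteq> vars_ctx G"
  by (auto simp: ovars_def vars_ctx_def)

lemma subst_tm_cong: "(\<And>v. v \<in> vars_tm t \<Longrightarrow> s1 v = s2 v) \<Longrightarrow> subst_tm s1 t = subst_tm s2 t"
  by (induction t) auto

lemma subst_ty_cong: "(\<And>v. v \<in> vars_ty A \<Longrightarrow> s1 v = s2 v) \<Longrightarrow> subst_ty s1 A = subst_ty s2 A"
  by (cases A) (auto intro!: subst_tm_cong)

lemma subst_tm_subst_tm: "subst_tm s2 (subst_tm s1 t) = subst_tm (\<lambda>v. subst_tm s2 (s1 v)) t"
  by (induction t) auto

lemma subst_ty_subst_ty: "subst_ty s2 (subst_ty s1 A) = subst_ty (\<lambda>v. subst_tm s2 (s1 v)) A"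
  by (cases A) (auto simp: subst_tm_subst_tm)

lemma subst_tm_Var: "subst_tm Var t = t"
  by (induction t) (auto simp: map_idI)

lemma subst_ty_Var: "subst_ty Var A = A"
  by (cases A) (auto simp: subst_tm_Var map_idI)

lemma sub_of_map_Var: "sub_of xs (map Var xs) = Var"
proof
  fix v show "sub_of xs (map Var xs) v = Var v"
    unfolding sub_of_def by (induction xs) auto
qed

lemma sub_of_map:
  "length xs = length as \<Longrightarrow> v \<in> set xs \<Longrightarrow> sub_of xs (map f as) v = f (sub_of xs as v)"
  unfolding sub_of_def by (induction xs as rule: list_induct2) auto

lemma sub_of_take:
  "length xs = length as \<Longrightarrow> v \<in> set (take k xs) \<Longrightarrow> sub_of xs as v = sub_of (take k xs) (take k as) v"
  unfolding sub_of_def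
proof (induction xs as arbitrary: k rule: list_induct2)
  case (Cons x xs a as) then show ?case by (cases k) auto
qed simp

lemma sub_of_nth:
  "length xs = length as \<Longrightarrow> distinct xs \<Longrightarrow> i < length xs \<Longrightarrow> sub_of xs as (xs ! i) = as ! i"
  unfolding sub_of_def by (simp add: map_of_zip_nth)

lemma subst_ty_sub_of_subst:
  assumes "vars_ty U \<subseteq> set xs" and "length xs = length as"
  shows "subst_ty s (subst_ty (sub_of xs as) U) = subst_ty (sub_of xs (map (subst_tm s) as)) U"
  unfolding subst_ty_subst_ty
  by (rule subst_ty_cong) (use assms in \<open>auto simp: sub_of_map\<close>)

lemma map_nth_map:
  "\<forall>i\<in>set is. i < length as \<Longrightarrow> map ((!) (map f as)) is = map (\<lambda>i. f (as ! i)) is"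
  by auto

section \<open>Well-scopedness of judgements\<close>

lemma determining_less: "determining G is \<Longrightarrow> i \<in> set is \<Longrightarrow> i < length G"
  unfolding determining_def by blast

lemma signature_TyDecl:
  "signature phi Sig \<Longrightarrow> TyDecl G S is \<in> Sig \<Longrightarrow> CtxJ G \<in> judg phi Sig \<and> determining G is"
  unfolding signature_def by blast

lemma signature_FnDecl:
  "signature phi Sig \<Longrightarrow> FnDecl G f is U \<in> Sig \<Longrightarrow>
     CtxJ G \<in> judg phi Sig \<and> determining G is \<and> vars_ty U \<subseteq> vars_ctx G \<and> TypeJ U G \<in> judg phi Sig"
  unfolding signature_def by blast

lemma var_system_fresh_notin: "var_system phi fr \<Longrightarrow> finite X \<Longrightarrow> x \<in> phi X \<Longrightarrow> x \<notin> X"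
  unfolding var_system_def by blast

lemma var_system_fr_in: "var_system phi fr \<Longrightarrow> finite X \<Longrightarrow> fr X \<in> phi X"
  unfolding var_system_def by blast

definition well_scoped :: "('v,'f,'s) jdg \<Rightarrow> bool" where
  "well_scoped J = (case J of
      CtxJ G \<Rightarrow> distinct (ovars G) \<and> (\<forall>k<length G. vars_ty (snd (G ! k)) \<subseteq> set (take k (ovars G)))
    | TypeJ A G \<Rightarrow> vars_ty A \<subseteq> set (ovars G)
    | ElemJ a A G \<Rightarrow> vars_tm a \<subseteq> set (ovars G) \<and> vars_ty A \<subseteq> set (ovars G))"

lemma mor_judg_args_scoped:
  assumes "mor_judg J D G as" and "\<forall>j\<in>J. well_scoped j" and "k < length as"
  shows "vars_tm (as ! k) \<subseteq> set (ovars D)"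
  using assms unfolding mor_judg_def well_scoped_def by fastforce

lemma judg_well_scoped:
  assumes vs: "var_system phi fr" and sig: "signature phi Sig"
  shows "J \<in> judg phi Sig \<Longrightarrow> well_scoped J"
proof (induction rule: judg.induct)
  case R1
  then show ?case by (simp add: well_scoped_def ovars_def)
next
  case (R2 G A x)
  note G = \<open>well_scoped (CtxJ G)\<close> and A = \<open>well_scoped (TypeJ A G)\<close>
  have "x \<notin> set (ovars G)"
    using var_system_fresh_notin[OF vs finite_vars_ctx \<open>x \<in> phi (vars_ctx G)\<close>]
      set_ovars_subset_vars_ctx[of G] by blast
  moreover have "vars_ty (snd ((G @ [(x, A)]) ! k)) \<subseteq> set (take k (ovars (G @ [(x, A)])))"
    if "k < Suc (length G)" for k
  proof (cases "k = length G")
    case True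
    with A show ?thesis by (simp add: well_scoped_def ovars_def)
  next
    case False
    with that G show ?thesis by (simp add: well_scoped_def ovars_def nth_append)
  qed
  ultimately show ?case
    using G by (simp add: well_scoped_def ovars_def)
next
  case (R3 G i)
  then show ?case
    using set_take_subset[of i "ovars G"] by (auto simp: well_scoped_def ovars_def)
next
  case (R4 G S "is" D as)
  note m = \<open>mor_judg {J \<in> judg phi Sig. well_scoped J} D G as\<close>
  have det: "determining G is" using signature_TyDecl[OF sig R4(1)] by blast
  have "vars_tm (as ! i) \<subseteq> set (ovars D)" if "i \<in> set is" for i
    by (rule mor_judg_args_scoped[OF m]) (use m that determining_less[OF det] in \<open>auto simp: mor_judg_def\<close>)
  then show ?case by (auto simp: well_scoped_def)
next
  case (R5 G f "is" U D as)
  note m = \<open>mor_judg {J \<in> judg phi Sig. well_scoped J} D G as\<close>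
  have det: "determining G is" using signature_FnDecl[OF sig R5(1)] by blast
  have "vars_tm (as ! i) \<subseteq> set (ovars D)" if "i \<in> set is" for i
    by (rule mor_judg_args_scoped[OF m]) (use m that determining_less[OF det] in \<open>auto simp: mor_judg_def\<close>)
  with \<open>well_scoped (TypeJ (subst_ty (sub_of (ovars G) as) U) D)\<close> show ?case
    by (auto simp: well_scoped_def)
qed

lemma ctx_well_scoped:
  assumes "var_system phi fr" "signature phi Sig" "CtxJ G \<in> judg phi Sig"
  shows "distinct (ovars G)" "k < length G \<Longrightarrow> vars_ty (snd (G ! k)) \<subseteq> set (take k (ovars G))"
  using judg_well_scoped[OF assms] by (auto simp: well_scoped_def)

lemma vars_ctx_eq_set_ovars:
  assumes "var_system phi fr" "signature phi Sig" "CtxJ G \<in> judg phi Sig"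
  shows "vars_ctx G = set (ovars G)"
proof
  show "vars_ctx G \<subseteq> set (ovars G)"
  proof
    fix v assume "v \<in> vars_ctx G"
    then consider "v \<in> set (ovars G)" | k where "k < length G" "v \<in> vars_ty (snd (G ! k))"
      unfolding vars_ctx_def ovars_def by (auto simp: in_set_conv_nth)
    then show "v \<in> set (ovars G)"
    proof cases
      case 2
      then show ?thesis
        using ctx_well_scoped(2)[OF assms \<open>k < length G\<close>] set_take_subset[of k "ovars G"] by blast
    qed
  qed
qed (rule set_ovars_subset_vars_ctx)

section \<open>Substitution along context morphisms\<close>

definition subst_stable :: "('v set \<Rightarrow> 'v set) \<Rightarrow> ('v,'f,'s) decl set \<Rightarrow> ('v,'f,'s) jdg \<Rightarrow> bool" where
  "subst_stable phi Sig J = (case J of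
      CtxJ G \<Rightarrow> True
    | TypeJ A G \<Rightarrow> (\<forall>D as. mor_judg (judg phi Sig) D G as \<longrightarrow>
          TypeJ (subst_ty (sub_of (ovars G) as) A) D \<in> judg phi Sig)
    | ElemJ a A G \<Rightarrow> (\<forall>D as. mor_judg (judg phi Sig) D G as \<longrightarrow>
          ElemJ (subst_tm (sub_of (ovars G) as) a) (subst_ty (sub_of (ovars G) as) A) D \<in> judg phi Sig))"

lemma mor_judg_comp_of_subst_stable:
  assumes vs: "var_system phi fr" and sig: "signature phi Sig"
    and m0: "mor_judg {J \<in> judg phi Sig. subst_stable phi Sig J} D0 G0 as0"
    and m: "mor_judg (judg phi Sig) D D0 bs"
  shows "mor_judg (judg phi Sig) D G0 (map (subst_tm (sub_of (ovars D0) bs)) as0)"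
proof -
  let ?s = "sub_of (ovars D0) bs"
  have G0: "CtxJ G0 \<in> judg phi Sig" and len: "length as0 = length G0"
    using m0 by (auto simp: mor_judg_def)
  have "ElemJ (map (subst_tm ?s) as0 ! k)
      (subst_ty (sub_of (take k (ovars G0)) (take k (map (subst_tm ?s) as0))) (snd (G0 ! k))) D
      \<in> judg phi Sig" if k: "k < length G0" for k
  proof -
    let ?Ak = "subst_ty (sub_of (take k (ovars G0)) (take k as0)) (snd (G0 ! k))"
    have "subst_stable phi Sig (ElemJ (as0 ! k) ?Ak D0)"
      using m0 k unfolding mor_judg_def by blast
    then have "ElemJ (subst_tm ?s (as0 ! k)) (subst_ty ?s ?Ak) D \<in> judg phi Sig"
      using m unfolding subst_stable_def by simp
    moreover have "subst_ty ?s ?Ak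
        = subst_ty (sub_of (take k (ovars G0)) (take k (map (subst_tm ?s) as0))) (snd (G0 ! k))"
      unfolding take_map
      by (rule subst_ty_sub_of_subst) (use ctx_well_scoped(2)[OF vs sig G0 k] len in \<open>simp_all add: ovars_def\<close>)
    ultimately show ?thesis
      using k len by simp
  qed
  with G0 len m show ?thesis
    by (simp add: mor_judg_def)
qed

lemma judg_subst_stable:
  assumes vs: "var_system phi fr" and sig: "signature phi Sig"
  shows "J \<in> judg phi Sig \<Longrightarrow> subst_stable phi Sig J"
proof (induction rule: judg.induct)
  case (R3 G i)
  have "ElemJ (subst_tm (sub_of (ovars G) as) (Var (fst (G ! i))))
      (subst_ty (sub_of (ovars G) as) (snd (G ! i))) D \<in> judg phi Sig"
    if m: "mor_judg (judg phi Sig) D G as" for D as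
  proof -
    have len: "length (ovars G) = length as" using m by (simp add: mor_judg_def ovars_def)
    have "sub_of (ovars G) as (fst (G ! i)) = as ! i"
      using sub_of_nth[OF len ctx_well_scoped(1)[OF vs sig R3(1)]] R3(2) by (simp add: ovars_def)
    moreover have "subst_ty (sub_of (ovars G) as) (snd (G ! i))
        = subst_ty (sub_of (take i (ovars G)) (take i as)) (snd (G ! i))"
      by (rule subst_ty_cong, rule sub_of_take[OF len])
        (use ctx_well_scoped(2)[OF vs sig R3(1) R3(2)] in blast)
    ultimately show ?thesis
      using m R3(2) unfolding mor_judg_def by simp
  qed
  then show ?case by (simp add: subst_stable_def)
next
  case (R4 G0 S "is" D0 as0)
  note m0 = \<open>mor_judg {J \<in> judg phi Sig. subst_stable phi Sig J} D0 G0 as0\<close>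
  have "TypeJ (subst_ty (sub_of (ovars D0) bs) (TyApp S (map ((!) as0) is))) D \<in> judg phi Sig"
    if m: "mor_judg (judg phi Sig) D D0 bs" for D bs
  proof -
    let ?s = "sub_of (ovars D0) bs"
    have "\<forall>i\<in>set is. i < length as0"
      using m0 determining_less signature_TyDecl[OF sig R4(1)] by (fastforce simp: mor_judg_def)
    with judg.R4[OF R4(1) mor_judg_comp_of_subst_stable[OF vs sig m0 m]] show ?thesis
      by (simp add: map_nth_map comp_def)
  qed
  then show ?case by (simp add: subst_stable_def)
next
  case (R5 G0 f "is" U D0 as0)
  note m0 = \<open>mor_judg {J \<in> judg phi Sig. subst_stable phi Sig J} D0 G0 as0\<close>
  note decl = signature_FnDecl[OF sig R5(1)]
  have len: "length (ovars G0) = length as0" using m0 by (simp add: mor_judg_def ovars_def)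
  have U: "vars_ty U \<subseteq> set (ovars G0)"
    using decl vars_ctx_eq_set_ovars[OF vs sig] by blast
  have "ElemJ (subst_tm (sub_of (ovars D0) bs) (App f (map ((!) as0) is)))
      (subst_ty (sub_of (ovars D0) bs) (subst_ty (sub_of (ovars G0) as0) U)) D \<in> judg phi Sig"
    if m: "mor_judg (judg phi Sig) D D0 bs" for D bs
  proof -
    let ?s = "sub_of (ovars D0) bs"
    have "\<forall>i\<in>set is. i < length as0"
      using decl determining_less[of G0 "is"] len by (auto simp: ovars_def)
    moreover have "TypeJ (subst_ty ?s (subst_ty (sub_of (ovars G0) as0) U)) D \<in> judg phi Sig"
      using \<open>subst_stable phi Sig (TypeJ (subst_ty (sub_of (ovars G0) as0) U) D0)\<close> m
      unfolding subst_stable_def by simp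
    ultimately show ?thesis
      using judg.R5[OF R5(1) mor_judg_comp_of_subst_stable[OF vs sig m0 m]]
      by (simp add: map_nth_map comp_def subst_ty_sub_of_subst[OF U len])
  qed
  then show ?case by (simp add: subst_stable_def)
qed (simp_all add: subst_stable_def)

lemma judg_subst_type:
  assumes "var_system phi fr" "signature phi Sig" "TypeJ A G \<in> judg phi Sig"
    and "mor_judg (judg phi Sig) D G as"
  shows "TypeJ (subst_ty (sub_of (ovars G) as) A) D \<in> judg phi Sig"
  using judg_subst_stable[OF assms(1-3)] assms(4) by (simp add: subst_stable_def)

lemma judg_subst_elem:
  assumes "var_system phi fr" "signature phi Sig" "ElemJ a A G \<in> judg phi Sig"
    and "mor_judg (judg phi Sig) D G as"
  shows "ElemJ (subst_tm (sub_of (ovars G) as) a) (subst_ty (sub_of (ovars G) as) A) D \<in> judg phi Sig"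
  using judg_subst_stable[OF assms(1-3)] assms(4) by (simp add: subst_stable_def)

lemma mor_judg_comp:
  assumes vs: "var_system phi fr" and sig: "signature phi Sig"
    and "mor_judg (judg phi Sig) D0 G0 as0" and "mor_judg (judg phi Sig) D D0 bs"
  shows "mor_judg (judg phi Sig) D G0 (map (subst_tm (sub_of (ovars D0) bs)) as0)"
proof (rule mor_judg_comp_of_subst_stable[OF vs sig _ assms(4)])
  show "mor_judg {J \<in> judg phi Sig. subst_stable phi Sig J} D0 G0 as0"
    by (rule mor_judg_mono[THEN mp, OF _ assms(3)]) (use judg_subst_stable[OF vs sig] in blast)
qed

lemma ctx_snocD:
  assumes "CtxJ (G @ [(x, A)]) \<in> judg phi Sig"
  shows "CtxJ G \<in> judg phi Sig" "TypeJ A G \<in> judg phi Sig" "x \<in> phi (vars_ctx G)"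
  using assms by (cases rule: judg.cases; auto)+

lemma ctx_snoc_fresh:
  assumes "de_bruijn phi fr" "CtxJ (G @ [(x, A)]) \<in> judg phi Sig"
  shows "x = fresh fr G"
  using ctx_snocD(3)[OF assms(2)] assms(1) finite_vars_ctx[of G]
  unfolding de_bruijn_def fresh_def by auto

lemma mor_judg_proj:
  assumes "CtxJ (G @ [(x, A)]) \<in> judg phi Sig"
  shows "mor_judg (judg phi Sig) (G @ [(x, A)]) G (map Var (ovars G))"
  unfolding mor_judg_def
  (* qualified names: the unqualified allI and impI are rules of the inductive set thms *)
proof (intro conjI HOL.allI HOL.impI)
  fix k assume k: "k < length G"
  have "ElemJ (Var (fst ((G @ [(x, A)]) ! k))) (snd ((G @ [(x, A)]) ! k)) (G @ [(x, A)]) \<in> judg phi Sig"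
    by (rule judg.R3[OF assms]) (use k in simp)
  then show "ElemJ (map Var (ovars G) ! k)
      (subst_ty (sub_of (take k (ovars G)) (take k (map Var (ovars G)))) (snd (G ! k))) (G @ [(x, A)])
      \<in> judg phi Sig"
    using k unfolding take_map sub_of_map_Var subst_ty_Var by (simp add: nth_append ovars_def)
qed (use assms ctx_snocD(1)[OF assms] in \<open>auto simp: ovars_def\<close>)

lemma judg_weaken_elem:
  assumes "var_system phi fr" "signature phi Sig"
    and "ElemJ a B G \<in> judg phi Sig" "CtxJ (G @ [(y, C)]) \<in> judg phi Sig"
  shows "ElemJ a B (G @ [(y, C)]) \<in> judg phi Sig"
  using judg_subst_elem[OF assms(1-3) mor_judg_proj[OF assms(4)]]
  by (simp add: sub_of_map_Var subst_ty_Var subst_tm_Var)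

lemma mor_judg_lift:
  assumes vs: "var_system phi fr" and sig: "signature phi Sig"
    and m: "mor_judg (judg phi Sig) D G as" and GA: "CtxJ (G @ [(x, A)]) \<in> judg phi Sig"
  defines "A' \<equiv> subst_ty (sub_of (ovars G) as) A" and "y \<equiv> fresh fr D"
  shows "mor_judg (judg phi Sig) (D @ [(y, A')]) (G @ [(x, A)]) (as @ [Var y])"
  unfolding mor_judg_def
proof (intro conjI HOL.allI HOL.impI)
  have D: "CtxJ D \<in> judg phi Sig" and len: "length as = length G"
    using m by (auto simp: mor_judg_def)
  show DA: "CtxJ (D @ [(y, A')]) \<in> judg phi Sig"
    unfolding A'_def y_def fresh_def
    by (rule judg.R2[OF D judg_subst_type[OF vs sig ctx_snocD(2)[OF GA] m]])
      (rule var_system_fr_in[OF vs finite_vars_ctx])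
  show "CtxJ (G @ [(x, A)]) \<in> judg phi Sig" by (rule GA)
  show "length (as @ [Var y]) = length (G @ [(x, A)])" using len by simp
  fix k assume k: "k < length (G @ [(x, A)])"
  show "ElemJ ((as @ [Var y]) ! k)
      (subst_ty (sub_of (take k (ovars (G @ [(x, A)]))) (take k (as @ [Var y]))) (snd ((G @ [(x, A)]) ! k)))
      (D @ [(y, A')]) \<in> judg phi Sig"
  proof (cases "k < length G")
    case True
    then have "ElemJ (as ! k) (subst_ty (sub_of (take k (ovars G)) (take k as)) (snd (G ! k))) D \<in> judg phi Sig"
      using m by (simp add: mor_judg_def)
    from judg_weaken_elem[OF vs sig this DA] show ?thesis
      using True len by (simp add: nth_append ovars_def)
  next
    case False
    then have "k = length G" using k by simp
    moreover have "ElemJ (Var (fst ((D @ [(y, A')]) ! length D))) (snd ((D @ [(y, A')]) ! length D))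
        (D @ [(y, A')]) \<in> judg phi Sig"
      by (rule judg.R3[OF DA]) simp
    ultimately show ?thesis using len by (simp add: nth_append ovars_def A'_def)
  qed
qed

lemma forms_ctx: "(a, G) \<in> forms phi Sig Pi \<Longrightarrow> CtxJ G \<in> judg phi Sig"
  by (induction rule: forms.induct) (auto simp: mor_judg_def dest: ctx_snocD(1))

lemma forms_subformulaD:
  "(FAnd a b, G) \<in> forms phi Sig Pi \<Longrightarrow> (a, G) \<in> forms phi Sig Pi \<and> (b, G) \<in> forms phi Sig Pi"
  "(FOr a b, G) \<in> forms phi Sig Pi \<Longrightarrow> (a, G) \<in> forms phi Sig Pi \<and> (b, G) \<in> forms phi Sig Pi"
  "(FImp a b, G) \<in> forms phi Sig Pi \<Longrightarrow> (a, G) \<in> forms phi Sig Pi \<and> (b, G) \<in> forms phi Sig Pi"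
  "(FAll x A b, G) \<in> forms phi Sig Pi \<Longrightarrow> (b, G @ [(x, A)]) \<in> forms phi Sig Pi"
  "(FEx x A b, G) \<in> forms phi Sig Pi \<Longrightarrow> (b, G @ [(x, A)]) \<in> forms phi Sig Pi"
  by (erule forms.cases; auto)+

lemma forms_fsub:
  assumes vs: "var_system phi fr" and sig: "signature phi Sig" and psig: "pred_signature phi Sig Pi"
  shows "(a, G) \<in> forms phi Sig Pi \<Longrightarrow> mor_judg (judg phi Sig) D G as
    \<Longrightarrow> (fsub fr a D G as, D) \<in> forms phi Sig Pi"
proof (induction arbitrary: D as rule: forms.induct)
  case (atom G0 "is" R D0 as0)
  have "determining G0 is" using psig atom(1) unfolding pred_signature_def by blast
  then have "\<forall>i\<in>set is. i < length as0"
    using atom(2) determining_less by (fastforce simp: mor_judg_def)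
  with forms.atom[OF atom(1) mor_judg_comp[OF vs sig atom(2,3)]] show ?case
    by (simp add: map_nth_map comp_def)
next
  case (all a G x A)
  have "(fsub fr a (D @ [(fresh fr D, subst_ty (sub_of (ovars G) as) A)]) (G @ [(x, A)])
      (as @ [Var (fresh fr D)]), D @ [(fresh fr D, subst_ty (sub_of (ovars G) as) A)]) \<in> forms phi Sig Pi"
    by (rule all.IH, rule mor_judg_lift[OF vs sig all.prems forms_ctx[OF all.hyps(1)]])
  with judg_subst_type[OF vs sig all.hyps(2) all.prems] show ?case
    by (simp add: Let_def forms.all)
next
  case (ex a G x A)
  have "(fsub fr a (D @ [(fresh fr D, subst_ty (sub_of (ovars G) as) A)]) (G @ [(x, A)])
      (as @ [Var (fresh fr D)]), D @ [(fresh fr D, subst_ty (sub_of (ovars G) as) A)]) \<in> forms phi Sig Pi"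
    by (rule ex.IH, rule mor_judg_lift[OF vs sig ex.prems forms_ctx[OF ex.hyps(1)]])
  with judg_subst_type[OF vs sig ex.hyps(2) ex.prems] show ?case
    by (simp add: Let_def forms.ex)
qed (auto simp: mor_judg_def intro: forms.intros)

lemma forms_fweak:
  assumes "var_system phi fr" "signature phi Sig" "pred_signature phi Sig Pi"
    and "(a, G) \<in> forms phi Sig Pi" "CtxJ (G @ [(x, A)]) \<in> judg phi Sig"
  shows "(fweak fr a G x A, G @ [(x, A)]) \<in> forms phi Sig Pi"
  unfolding fweak_def by (rule forms_fsub[OF assms(1-4) mor_judg_proj[OF assms(5)]])

lemma thms_forms:
  assumes vs: "var_system phi fr" and sig: "signature phi Sig" and psig: "pred_signature phi Sig Pi"
    and T: "theory_over phi Sig Pi T"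
  shows "(a, G, b) \<in> thms phi fr Sig Pi T \<Longrightarrow> (a, G) \<in> forms phi Sig Pi \<and> (b, G) \<in> forms phi Sig Pi"
proof (induction rule: thms.induct[split_format (complete)])
  case (ax a G b)
  then show ?case using T unfolding theory_over_def by fast
next
  case (impI c b G a)
  then show ?case by (auto intro: forms.imp dest: forms_subformulaD(1))
next
  case (impE c G b a)
  then show ?case by (auto intro: forms.conj dest: forms_subformulaD(3))
next
  case (allE a G x A b)
  then have "(b, G @ [(x, A)]) \<in> forms phi Sig Pi" by (blast dest: forms_subformulaD(4))
  with allE show ?case by (blast intro: forms_fweak[OF vs sig psig] forms_ctx)
next
  case (exI x A b G a)
  then have "(b, G @ [(x, A)]) \<in> forms phi Sig Pi" by (blast dest: forms_subformulaD(5))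
  with exI show ?case by (blast intro: forms_fweak[OF vs sig psig] forms_ctx)
next
  case (subst a G b D as)
  then show ?case by (blast intro: forms_fsub[OF vs sig psig])
qed (auto intro: forms.intros dest: forms_subformulaD forms_ctx)

context
  fixes H :: "'a heyting"
  assumes H: "heyting_prealg H"
begin

lemma heyting_prealg_refl: "x \<in> hcar H \<Longrightarrow> hle H x x"
  using H unfolding heyting_prealg_def by (elim conjE) blast

lemma heyting_prealg_trans:
  "x \<in> hcar H \<Longrightarrow> y \<in> hcar H \<Longrightarrow> z \<in> hcar H \<Longrightarrow> hle H x y \<Longrightarrow> hle H y z \<Longrightarrow> hle H x z"
  using H unfolding heyting_prealg_def by (elim conjE) blast

lemma heyting_prealg_top_greatest: "x \<in> hcar H \<Longrightarrow> hle H x (htop H)"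
  using H unfolding heyting_prealg_def by (elim conjE) blast

lemma heyting_prealg_bot_least: "x \<in> hcar H \<Longrightarrow> hle H (hbot H) x"
  using H unfolding heyting_prealg_def by (elim conjE) blast

lemma heyting_prealg_closed:
  "x \<in> hcar H \<Longrightarrow> y \<in> hcar H \<Longrightarrow> hmeet H x y \<in> hcar H \<and> hjoin H x y \<in> hcar H \<and> himp H x y \<in> hcar H"
  using H unfolding heyting_prealg_def by (elim conjE) blast

lemma heyting_prealg_meet_iff:
  "x \<in> hcar H \<Longrightarrow> y \<in> hcar H \<Longrightarrow> z \<in> hcar H \<Longrightarrow> hle H z (hmeet H x y) \<longleftrightarrow> hle H z x \<and> hle H z y"
  using H unfolding heyting_prealg_def by (elim conjE) blast

lemma heyting_prealg_join_iff:
  "x \<in> hcar H \<Longrightarrow> y \<in> hcar H \<Longrightarrow> z \<in> hcar H \<Longrightarrow> hle H (hjoin H x y) z \<longleftrightarrow> hle H x z \<and> hle H y z"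
  using H unfolding heyting_prealg_def by (elim conjE) blast

lemma heyting_prealg_imp_iff:
  "x \<in> hcar H \<Longrightarrow> y \<in> hcar H \<Longrightarrow> z \<in> hcar H \<Longrightarrow> hle H z (himp H x y) \<longleftrightarrow> hle H (hmeet H z x) y"
  using H unfolding heyting_prealg_def by (elim conjE) blast

lemma heyting_prealg_meet_lower:
  "x \<in> hcar H \<Longrightarrow> y \<in> hcar H \<Longrightarrow> hle H (hmeet H x y) x \<and> hle H (hmeet H x y) y"
  by (meson heyting_prealg_meet_iff heyting_prealg_closed heyting_prealg_refl)

lemma heyting_prealg_join_upper:
  "x \<in> hcar H \<Longrightarrow> y \<in> hcar H \<Longrightarrow> hle H x (hjoin H x y) \<and> hle H y (hjoin H x y)"
  by (meson heyting_prealg_join_iff heyting_prealg_closed heyting_prealg_refl)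

end

context
  fixes H :: "'a heyting" and H' :: "'b heyting" and h :: "'a \<Rightarrow> 'b"
  assumes h: "heyting_hom H H' h"
begin

lemma heyting_hom_carrier: "x \<in> hcar H \<Longrightarrow> h x \<in> hcar H'"
  using h unfolding heyting_hom_def by (elim conjE) blast

lemma heyting_hom_mono: "x \<in> hcar H \<Longrightarrow> y \<in> hcar H \<Longrightarrow> hle H x y \<Longrightarrow> hle H' (h x) (h y)"
  using h unfolding heyting_hom_def by (elim conjE) blast

lemma heyting_hom_top: "h (htop H) = htop H'"
  using h unfolding heyting_hom_def by (elim conjE) blast

lemma heyting_hom_bot: "h (hbot H) = hbot H'"
  using h unfolding heyting_hom_def by (elim conjE) blast

lemma heyting_hom_ops:
  "x \<in> hcar H \<Longrightarrow> y \<in> hcar H \<Longrightarrow>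
    h (hmeet H x y) = hmeet H' (h x) (h y) \<and> h (hjoin H x y) = hjoin H' (h x) (h y) \<and>
    h (himp H x y) = himp H' (h x) (h y)"
  using h unfolding heyting_hom_def by (elim conjE) blast

lemma heyting_hom_change_order:
  assumes "\<And>x y. x \<in> hcar H \<Longrightarrow> y \<in> hcar H \<Longrightarrow> le x y \<Longrightarrow> hle H' (h x) (h y)"
  shows "heyting_hom (H\<lparr>hle := le\<rparr>) H' h"
  using h assms unfolding heyting_hom_def by simp

end

lemma hyperdoctrine_prealg: "hyperdoctrine C H \<Longrightarrow> X \<in> cw_obj C \<Longrightarrow> heyting_prealg (hd_Pr H X)"
  by (simp add: hyperdoctrine_def)

lemma hyperdoctrine_sub_hom:
  "hyperdoctrine C H \<Longrightarrow> X \<in> cw_obj C \<Longrightarrow> Y \<in> cw_obj C \<Longrightarrow> f \<in> cw_hom C Y X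
    \<Longrightarrow> heyting_hom (hd_Pr H X) (hd_Pr H Y) (\<lambda>R. hd_sub H R f)"
  by (simp add: hyperdoctrine_def)

lemma hyperdoctrine_adjoints:
  assumes "hyperdoctrine C H" "X \<in> cw_obj C" "S \<in> cw_Ty C X"
    and "Q \<in> hcar (hd_Pr H X)" "R \<in> hcar (hd_Pr H (cw_ext C X S))"
  shows "hle (hd_Pr H X) Q (hd_all H X S R) \<longleftrightarrow> hle (hd_Pr H (cw_ext C X S)) (hd_sub H Q (cw_p C X S)) R"
    and "hle (hd_Pr H X) (hd_ex H X S R) Q \<longleftrightarrow> hle (hd_Pr H (cw_ext C X S)) R (hd_sub H Q (cw_p C X S))"
  using assms by (simp_all add: hyperdoctrine_def)

lemma cwf_morphism_obj: "cwf_morphism C C' Fo Fm sg th \<Longrightarrow> X \<in> cw_obj C \<Longrightarrow> Fo X \<in> cw_obj C'"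
  unfolding cwf_morphism_def by (elim conjE) blast

lemma cwf_morphism_hom:
  "cwf_morphism C C' Fo Fm sg th \<Longrightarrow> X \<in> cw_obj C \<Longrightarrow> Y \<in> cw_obj C \<Longrightarrow> f \<in> cw_hom C Y X
    \<Longrightarrow> Fm f \<in> cw_hom C' (Fo Y) (Fo X)"
  unfolding cwf_morphism_def by (elim conjE) blast

lemma cwf_morphism_comprehension:
  "cwf_morphism C C' Fo Fm sg th \<Longrightarrow> X \<in> cw_obj C \<Longrightarrow> S \<in> cw_Ty C X \<Longrightarrow>
    sg X S \<in> cw_Ty C' (Fo X) \<and> Fo (cw_ext C X S) = cw_ext C' (Fo X) (sg X S) \<and>
    Fm (cw_p C X S) = cw_p C' (Fo X) (sg X S)"
  unfolding cwf_morphism_def by (elim conjE) blast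

context
  fixes C :: "('o,'m,'ty,'tm) cwf" and C' :: "('o2,'m2,'ty2,'tm2) cwf"
    and Fo :: "'o \<Rightarrow> 'o2" and Fm :: "'m \<Rightarrow> 'm2" and sg :: "'o \<Rightarrow> 'ty \<Rightarrow> 'ty2"
    and H :: "('o,'m,'ty,'a) hyperdoc" and H' :: "('o2,'m2,'ty2,'b) hyperdoc"
    and G :: "'o \<Rightarrow> 'a \<Rightarrow> 'b"
  assumes G: "hd_morphism C C' Fo Fm sg H H' G"
begin

lemma hd_morphism_hom: "X \<in> cw_obj C \<Longrightarrow> heyting_hom (hd_Pr H X) (hd_Pr H' (Fo X)) (G X)"
  using G unfolding hd_morphism_def by (elim conjE) blast

lemma hd_morphism_sub:
  "X \<in> cw_obj C \<Longrightarrow> Y \<in> cw_obj C \<Longrightarrow> f \<in> cw_hom C Y X \<Longrightarrow> R \<in> hcar (hd_Pr H X)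
    \<Longrightarrow> G Y (hd_sub H R f) = hd_sub H' (G X R) (Fm f)"
  using G unfolding hd_morphism_def by (elim conjE) blast

lemma hd_morphism_quantifiers:
  "X \<in> cw_obj C \<Longrightarrow> S \<in> cw_Ty C X \<Longrightarrow> R \<in> hcar (hd_Pr H (cw_ext C X S)) \<Longrightarrow>
    G X (hd_all H X S R) = hd_all H' (Fo X) (sg X S) (G (cw_ext C X S) R) \<and>
    G X (hd_ex H X S R) = hd_ex H' (Fo X) (sg X S) (G (cw_ext C X S) R)"
  using G unfolding hd_morphism_def by (elim conjE) blast

lemma hd_morphism_change_order:
  assumes "hd_sub H2 = hd_sub H" "hd_all H2 = hd_all H" "hd_ex H2 = hd_ex H"
    and "\<And>X. hd_Pr H2 X = (hd_Pr H X)\<lparr>hle := le X\<rparr>"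
    and "\<And>X x y. X \<in> cw_obj C \<Longrightarrow> x \<in> hcar (hd_Pr H X) \<Longrightarrow> y \<in> hcar (hd_Pr H X) \<Longrightarrow> le X x y
      \<Longrightarrow> hle (hd_Pr H' (Fo X)) (G X x) (G X y)"
  shows "hd_morphism C C' Fo Fm sg H2 H' G"
  using G assms(1-4) heyting_hom_change_order[OF hd_morphism_hom assms(5)]
  unfolding hd_morphism_def by simp

end

section \<open>Soundness of derivations in a model of the empty theory\<close>

lemma FSig_obj: "CtxJ X \<in> judg phi Sig \<Longrightarrow> X \<in> cw_obj (FSig phi fr Sig)"
  by (simp add: FSig_def)

lemma LT_carrier: "(a, X) \<in> forms phi Sig Pi \<Longrightarrow> (X, a) \<in> hcar (hd_Pr (LT phi fr Sig Pi T) X)"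
  by (simp add: LT_def)

lemma FSig_comprehension_snoc:
  assumes "de_bruijn phi fr" and XA: "CtxJ (X @ [(x, A)]) \<in> judg phi Sig"
  shows "X \<in> cw_obj (FSig phi fr Sig)" "(X, A) \<in> cw_Ty (FSig phi fr Sig) X"
    "cw_ext (FSig phi fr Sig) X (X, A) = X @ [(x, A)]"
    "cw_p (FSig phi fr Sig) X (X, A) = (X @ [(x, A)], X, map Var (ovars X))"
  using ctx_snocD[OF XA] ctx_snoc_fresh[OF assms] by (simp_all add: FSig_def)

locale LT_model =
  fixes phi :: "'v set \<Rightarrow> 'v set" and fr :: "'v set \<Rightarrow> 'v"
    and Sig :: "('v,'f,'s) decl set" and Pi :: "('v,'f,'s,'r) pdecl set"
    and C :: "('o,'m,'ty,'tm) cwf"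
    and Fo :: "('v,'f,'s) ctx \<Rightarrow> 'o" and Fm :: "('v,'f,'s) smor \<Rightarrow> 'm"
    and sg :: "('v,'f,'s) ctx \<Rightarrow> ('v,'f,'s) sty \<Rightarrow> 'ty"
    and th :: "('v,'f,'s) ctx \<Rightarrow> ('v,'f,'s) sty \<Rightarrow> ('v,'f,'s) stm \<Rightarrow> 'tm"
    and D :: "('o,'m,'ty,'a) hyperdoc"
    and G :: "('v,'f,'s) ctx \<Rightarrow> ('v,'f,'s) ctx \<times> ('v,'f,'s,'r) form \<Rightarrow> 'a"
  assumes var_system: "var_system phi fr" and de_bruijn: "de_bruijn phi fr"
    and signature: "signature phi Sig" and pred_signature: "pred_signature phi Sig Pi"
    and cwf_morphism: "cwf_morphism (FSig phi fr Sig) C Fo Fm sg th"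
    and hyperdoctrine: "hyperdoctrine C D"
    and model: "hd_morphism (FSig phi fr Sig) C Fo Fm sg (LT phi fr Sig Pi {}) D G"
begin

abbreviation interp :: "('v,'f,'s) ctx \<Rightarrow> ('v,'f,'s,'r) form \<Rightarrow> 'a" where
  "interp X a \<equiv> G X (X, a)"

abbreviation leq :: "('v,'f,'s) ctx \<Rightarrow> 'a \<Rightarrow> 'a \<Rightarrow> bool" where
  "leq X \<equiv> hle (hd_Pr D (Fo X))"

lemma prealg: "CtxJ X \<in> judg phi Sig \<Longrightarrow> heyting_prealg (hd_Pr D (Fo X))"
  by (rule hyperdoctrine_prealg[OF hyperdoctrine cwf_morphism_obj[OF cwf_morphism FSig_obj]])

lemma interp_hom: "CtxJ X \<in> judg phi Sig \<Longrightarrow> heyting_hom (hd_Pr (LT phi fr Sig Pi {}) X) (hd_Pr D (Fo X)) (G X)"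
  by (rule hd_morphism_hom[OF model FSig_obj])

lemma interp_carrier: "(a, X) \<in> forms phi Sig Pi \<Longrightarrow> interp X a \<in> hcar (hd_Pr D (Fo X))"
  by (rule heyting_hom_carrier[OF interp_hom[OF forms_ctx] LT_carrier])

lemma interp_FTop: "CtxJ X \<in> judg phi Sig \<Longrightarrow> interp X FTop = htop (hd_Pr D (Fo X))"
  using heyting_hom_top[OF interp_hom] by (simp add: LT_def)

lemma interp_FBot: "CtxJ X \<in> judg phi Sig \<Longrightarrow> interp X FBot = hbot (hd_Pr D (Fo X))"
  using heyting_hom_bot[OF interp_hom] by (simp add: LT_def)

lemma interp_connectives:
  assumes "(a, X) \<in> forms phi Sig Pi" "(b, X) \<in> forms phi Sig Pi"
  shows "interp X (FAnd a b) = hmeet (hd_Pr D (Fo X)) (interp X a) (interp X b)"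
    and "interp X (FOr a b) = hjoin (hd_Pr D (Fo X)) (interp X a) (interp X b)"
    and "interp X (FImp a b) = himp (hd_Pr D (Fo X)) (interp X a) (interp X b)"
  using heyting_hom_ops[OF interp_hom[OF forms_ctx[OF assms(1)]] LT_carrier[OF assms(1)] LT_carrier[OF assms(2)]]
  by (simp_all add: LT_def)

lemma interp_fsub:
  assumes m: "mor_judg (judg phi Sig) Y X as" and a: "(a, X) \<in> forms phi Sig Pi"
  shows "interp Y (fsub fr a Y X as) = hd_sub D (interp X a) (Fm (Y, X, as))"
proof -
  have X: "CtxJ X \<in> judg phi Sig" and Y: "CtxJ Y \<in> judg phi Sig"
    using m by (auto simp: mor_judg_def)
  have "(Y, X, as) \<in> cw_hom (FSig phi fr Sig) Y X"
    using m by (simp add: FSig_def)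
  from hd_morphism_sub[OF model FSig_obj[OF X] FSig_obj[OF Y] this LT_carrier[OF a]]
  show ?thesis by (simp add: LT_def)
qed

lemma leq_fsub:
  assumes m: "mor_judg (judg phi Sig) Y X as"
    and a: "(a, X) \<in> forms phi Sig Pi" and b: "(b, X) \<in> forms phi Sig Pi"
    and "leq X (interp X a) (interp X b)"
  shows "leq Y (interp Y (fsub fr a Y X as)) (interp Y (fsub fr b Y X as))"
proof -
  have X: "CtxJ X \<in> judg phi Sig" and Y: "CtxJ Y \<in> judg phi Sig"
    using m by (auto simp: mor_judg_def)
  have f: "(Y, X, as) \<in> cw_hom (FSig phi fr Sig) Y X"
    using m by (simp add: FSig_def)
  note FX = cwf_morphism_obj[OF cwf_morphism FSig_obj[OF X]]
  note FY = cwf_morphism_obj[OF cwf_morphism FSig_obj[OF Y]]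
  note sub_hom = hyperdoctrine_sub_hom[OF hyperdoctrine FX FY
      cwf_morphism_hom[OF cwf_morphism FSig_obj[OF X] FSig_obj[OF Y] f]]
  show ?thesis
    unfolding interp_fsub[OF m a] interp_fsub[OF m b]
    by (rule heyting_hom_mono[OF sub_hom interp_carrier[OF a] interp_carrier[OF b]]) fact
qed

lemma Fo_snoc:
  assumes "CtxJ (X @ [(x, A)]) \<in> judg phi Sig"
  shows "sg X (X, A) \<in> cw_Ty C (Fo X)"
    and "Fo (X @ [(x, A)]) = cw_ext C (Fo X) (sg X (X, A))"
    and "Fm (X @ [(x, A)], X, map Var (ovars X)) = cw_p C (Fo X) (sg X (X, A))"
  using cwf_morphism_comprehension[OF cwf_morphism FSig_comprehension_snoc(1,2)[OF de_bruijn assms]]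
    FSig_comprehension_snoc(3,4)[OF de_bruijn assms]
  by simp_all

lemma interp_fweak:
  assumes XA: "CtxJ (X @ [(x, A)]) \<in> judg phi Sig" and a: "(a, X) \<in> forms phi Sig Pi"
  shows "interp (X @ [(x, A)]) (fweak fr a X x A) = hd_sub D (interp X a) (cw_p C (Fo X) (sg X (X, A)))"
  unfolding fweak_def interp_fsub[OF mor_judg_proj[OF XA] a] Fo_snoc(3)[OF XA] ..

lemma interp_quantifiers:
  assumes b: "(b, X @ [(x, A)]) \<in> forms phi Sig Pi"
  shows "interp X (FAll x A b) = hd_all D (Fo X) (sg X (X, A)) (interp (X @ [(x, A)]) b)"
    and "interp X (FEx x A b) = hd_ex D (Fo X) (sg X (X, A)) (interp (X @ [(x, A)]) b)"
proof -
  have XA: "CtxJ (X @ [(x, A)]) \<in> judg phi Sig" by (rule forms_ctx[OF b])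
  note FS = FSig_comprehension_snoc[OF de_bruijn XA]
  have "(X @ [(x, A)], b) \<in> hcar (hd_Pr (LT phi fr Sig Pi {}) (cw_ext (FSig phi fr Sig) X (X, A)))"
    using LT_carrier[OF b] FS(3) by simp
  from hd_morphism_quantifiers[OF model FS(1,2) this]
  show "interp X (FAll x A b) = hd_all D (Fo X) (sg X (X, A)) (interp (X @ [(x, A)]) b)"
    and "interp X (FEx x A b) = hd_ex D (Fo X) (sg X (X, A)) (interp (X @ [(x, A)]) b)"
    using FS(3) ctx_snoc_fresh[OF de_bruijn XA] by (simp_all add: LT_def)
qed

lemma leq_quantifier_iff:
  assumes a: "(a, X) \<in> forms phi Sig Pi" and b: "(b, X @ [(x, A)]) \<in> forms phi Sig Pi"
  shows "leq X (interp X a) (interp X (FAll x A b))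
      \<longleftrightarrow> leq (X @ [(x, A)]) (interp (X @ [(x, A)]) (fweak fr a X x A)) (interp (X @ [(x, A)]) b)"
    and "leq X (interp X (FEx x A b)) (interp X a)
      \<longleftrightarrow> leq (X @ [(x, A)]) (interp (X @ [(x, A)]) b) (interp (X @ [(x, A)]) (fweak fr a X x A))"
proof -
  have XA: "CtxJ (X @ [(x, A)]) \<in> judg phi Sig" by (rule forms_ctx[OF b])
  have R: "interp (X @ [(x, A)]) b \<in> hcar (hd_Pr D (cw_ext C (Fo X) (sg X (X, A))))"
    using interp_carrier[OF b] Fo_snoc(2)[OF XA] by simp
  note adj = hyperdoctrine_adjoints[OF hyperdoctrine
      cwf_morphism_obj[OF cwf_morphism FSig_obj[OF forms_ctx[OF a]]] Fo_snoc(1)[OF XA] interp_carrier[OF a] R]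
  show "leq X (interp X a) (interp X (FAll x A b))
      \<longleftrightarrow> leq (X @ [(x, A)]) (interp (X @ [(x, A)]) (fweak fr a X x A)) (interp (X @ [(x, A)]) b)"
    and "leq X (interp X (FEx x A b)) (interp X a)
      \<longleftrightarrow> leq (X @ [(x, A)]) (interp (X @ [(x, A)]) b) (interp (X @ [(x, A)]) (fweak fr a X x A))"
    using adj by (simp_all add: interp_quantifiers[OF b] interp_fweak[OF XA a] Fo_snoc(2)[OF XA])
qed

theorem soundness:
  assumes T: "theory_over phi Sig Pi T"
    and T_valid: "\<forall>(a, X, b)\<in>T. leq X (interp X a) (interp X b)"
    and "(a, X, b) \<in> thms phi fr Sig Pi T"
  shows "leq X (interp X a) (interp X b)"
proof -
  note forms = thms_forms[OF var_system signature pred_signature T]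
  note car = interp_carrier and ctx = forms_ctx
  from assms(3) show ?thesis
  proof (induction rule: thms.induct[split_format (complete)])
    case (ax a X b)
    then show ?case using T_valid by blast
  next
    case (refl a X)
    then show ?case using heyting_prealg_refl[OF prealg[OF ctx] car] by blast
  next
    case (cut a X c b)
    with forms[OF cut.hyps(1)] forms[OF cut.hyps(2)] show ?case
      by (meson heyting_prealg_trans prealg ctx car)
  next
    case (andE1 c b X)
    with forms_subformulaD(1)[OF andE1] show ?case
      by (simp add: interp_connectives heyting_prealg_meet_lower[OF prealg[OF ctx] car car])
  next
    case (andE2 c b X)
    with forms_subformulaD(1)[OF andE2] show ?case
      by (simp add: interp_connectives heyting_prealg_meet_lower[OF prealg[OF ctx] car car])
  next
    case (andI a X c b)
    with forms[OF andI.hyps(1)] forms[OF andI.hyps(2)] show ?case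
      by (simp add: interp_connectives heyting_prealg_meet_iff[OF prealg[OF ctx] car car car])
  next
    case (topI a X)
    then show ?case
      by (simp add: interp_FTop[OF ctx] heyting_prealg_top_greatest[OF prealg[OF ctx] car])
  next
    case (orI1 c b X)
    with forms_subformulaD(2)[OF orI1] show ?case
      by (simp add: interp_connectives heyting_prealg_join_upper[OF prealg[OF ctx] car car])
  next
    case (orI2 c b X)
    with forms_subformulaD(2)[OF orI2] show ?case
      by (simp add: interp_connectives heyting_prealg_join_upper[OF prealg[OF ctx] car car])
  next
    case (orE c X a b)
    with forms[OF orE.hyps(1)] forms[OF orE.hyps(2)] show ?case
      by (simp add: interp_connectives heyting_prealg_join_iff[OF prealg[OF ctx] car car car])
  next
    case (botE a X)
    then show ?case
      by (simp add: interp_FBot[OF ctx] heyting_prealg_bot_least[OF prealg[OF ctx] car])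
  next
    case (impI c b X a)
    have "(c, X) \<in> forms phi Sig Pi" "(b, X) \<in> forms phi Sig Pi" "(a, X) \<in> forms phi Sig Pi"
      using forms[OF impI.hyps] forms_subformulaD(1) by blast+
    with impI.IH show ?case
      by (simp add: interp_connectives heyting_prealg_imp_iff[OF prealg[OF ctx] car car car])
  next
    case (impE c X b a)
    have "(c, X) \<in> forms phi Sig Pi" "(b, X) \<in> forms phi Sig Pi" "(a, X) \<in> forms phi Sig Pi"
      using forms[OF impE.hyps] forms_subformulaD(3) by blast+
    with impE.IH show ?case
      by (simp add: interp_connectives heyting_prealg_imp_iff[OF prealg[OF ctx] car car car])
  next
    case (allI a X x A b)
    then show ?case
      using leq_quantifier_iff(1)[OF allI.hyps(2) forms_subformulaD(4)[OF allI.hyps(3)]] by simp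
  next
    case (allE a X x A b)
    from forms[OF allE.hyps] have "(a, X) \<in> forms phi Sig Pi" "(b, X @ [(x, A)]) \<in> forms phi Sig Pi"
      by (auto dest: forms_subformulaD(4))
    with allE.IH show ?case using leq_quantifier_iff(1) by simp
  next
    case (exE b X x A a)
    then show ?case
      using leq_quantifier_iff(2)[OF exE.hyps(2) forms_subformulaD(5)[OF exE.hyps(3)]] by simp
  next
    case (exI x A b X a)
    from forms[OF exI.hyps] have "(a, X) \<in> forms phi Sig Pi" "(b, X @ [(x, A)]) \<in> forms phi Sig Pi"
      by (auto dest: forms_subformulaD(5))
    with exI.IH show ?case using leq_quantifier_iff(2) by simp
  next
    case (subst a X b Y as)
    with forms[OF subst.hyps(1)] leq_fsub show ?case by blast
  qed
qed

lemma hd_morphism_LT: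
  assumes T: "theory_over phi Sig Pi T"
    and T_valid: "\<forall>(a, X, b)\<in>T. leq X (interp X a) (interp X b)"
  shows "hd_morphism (FSig phi fr Sig) C Fo Fm sg (LT phi fr Sig Pi T) D G"
proof (rule hd_morphism_change_order[OF model])
  show "hd_Pr (LT phi fr Sig Pi T) X
      = (hd_Pr (LT phi fr Sig Pi {}) X)\<lparr>hle := \<lambda>(G1, a) (G2, b). (a, G1, b) \<in> thms phi fr Sig Pi T\<rparr>" for X
    by (simp add: LT_def)
  show "leq X (G X u) (G X v)"
    if "u \<in> hcar (hd_Pr (LT phi fr Sig Pi {}) X)" "v \<in> hcar (hd_Pr (LT phi fr Sig Pi {}) X)"
      and "(\<lambda>(G1, a) (G2, b). (a, G1, b) \<in> thms phi fr Sig Pi T) u v" for X u v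
    using that soundness[OF T T_valid] by (auto simp: LT_def)
qed (simp_all add: LT_def)

end

theorem mainTheorem20:
  fixes phi :: "'v set \<Rightarrow> 'v set" and fr :: "'v set \<Rightarrow> 'v"
    and Sig :: "('v,'f,'s) decl set" and Pi :: "('v,'f,'s,'r) pdecl set"
    and C :: "('o,'m,'ty,'tm) cwf"
    and Fo :: "('v,'f,'s) ctx \<Rightarrow> 'o" and Fm :: "('v,'f,'s) smor \<Rightarrow> 'm"
    and sg :: "('v,'f,'s) ctx \<Rightarrow> ('v,'f,'s) sty \<Rightarrow> 'ty"
    and th :: "('v,'f,'s) ctx \<Rightarrow> ('v,'f,'s) sty \<Rightarrow> ('v,'f,'s) stm \<Rightarrow> 'tm"
    and D :: "('o,'m,'ty,'a) hyperdoc"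
    and G :: "('v,'f,'s) ctx \<Rightarrow> ('v,'f,'s) ctx \<times> ('v,'f,'s,'r) form \<Rightarrow> 'a"
    and T :: "('v,'f,'s,'r) seq set"
  assumes "var_system phi fr" and "de_bruijn phi fr"
    and "signature phi Sig" and "sig_standard Sig"
    and "cwf C"
    and "cwf_morphism (FSig phi fr Sig) C Fo Fm sg th"
    and "pred_signature phi Sig Pi" and "pred_standard Pi"
    and "hyperdoctrine C D"
    and "hd_morphism (FSig phi fr Sig) C Fo Fm sg (LT phi fr Sig Pi {}) D G"
    and "theory_over phi Sig Pi T"
    and "\<forall>(a, X, b)\<in>T. hle (hd_Pr D (Fo X)) (G X (X, a)) (G X (X, b))"
  shows "(\<forall>(a, X, b)\<in>thms phi fr Sig Pi T. hle (hd_Pr D (Fo X)) (G X (X, a)) (G X (X, b)))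
       \<and> hd_morphism (FSig phi fr Sig) C Fo Fm sg (LT phi fr Sig Pi T) D G"
proof -
  interpret LT_model phi fr Sig Pi C Fo Fm sg th D G
    using assms by unfold_locales
  show ?thesis
    using soundness[OF assms(11,12)] hd_morphism_LT[OF assms(11,12)] by blast
qed

end
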